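(* Let $d\ge 2$ and let $X$ be a finite uniform $d$-complex, with upper Laplacian $\Delta^+$ acting on $\Omega^{d-1}(X)$. Then: (1) $\operatorname{Spec}\Delta^+(X)$ is the union, counted with multiplicities, of the spectra $\operatorname{Spec}\Delta^+(X_C)$, where $C$ runs over the $(d-1)$-components of $X$. (2) $\operatorname{Spec}\Delta^+(X)\subseteq[0,d+1]$. (3) $\ker\Delta^+=Z^{d-1}$, i.e. the eigenvalue $0$ is attained exactly on the closed $(d-1)$-forms. (4) If $X$ is $(d-1)$-connected, then $d+1\in\operatorname{Spec}\Delta^+(X)$ if and only if $X$ is disorientable. Moreover, if $X^d_+$ is a disorientation and $F\in\Omega^d(X)$ is defined by $F(\tau)=1$ for $\tau\in X^d_+$ and $F(\tau)=-1$ for $\tau\in X^d_\pm\setminus X^d_+$, then $\Delta^+(\partial_dF)=(d+1)\,\partial_dF$ and $\partial_d F\neq 0$.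
   Context: A simplicial complex $X$ on a vertex set $V$ is a collection of finite subsets of $V$ (cells), closed under taking subsets (the empty set is a cell). A cell with $j+1$ elements is a $j$-cell; $X^j$ is the set of $j$-cells. $X$ is a $d$-complex if the maximal dimension of a cell is $d$; it is uniform if every cell lies in some $d$-cell. The degree $\deg\sigma$ of a $j$-cell $\sigma$ is the number of $(j+1)$-cells containing it. For $j\ge1$ each $j$-cell has two orientations (orderings of its vertices modulo even permutations), written $[v_0,\dots,v_j]$; $X^j_\pm$ is the set of oriented $j$-cells and $\bar\sigma$ denotes the opposite orientation. The oriented cell $[v_0,\dots,v_j]$ induces on its face $\{v_0,\dots,v_j\}\setminus\{v_i\}$ the orientation $(-1)^i[v_0,\dots,\widehat{v_i},\dots,v_j]$, where a factor $-1$ means reversing the orientation. For $v\notin\sigma$ write $v\triangleleft\sigma$ if $\sigma\cup\{v\}\in X$, and for oriented $\sigma=[\sigma_0,\dots,\sigma_k]$ let $v\sigma=[v,\sigma_0,\dots,\sigma_k]$. The space $\Omega^j=\Omega^j(X)$ of $j$-forms consists of the real functions $f$ on $X^j_\pm$ with $f(\bar\sigma)=-f(\sigma)$ (for $j=0$: all functions on $X^0$; for $j=-1$: functions on $\{\emptyset\}$). Two oriented $(d-1)$-cells are neighbours, $\sigma\sim\sigma'$, if some oriented $d$-cell $\tau$ has both $\sigma$ and $\overline{\sigma'}$ as faces with the orientations induced by $\tau$ (each $\sigma$ has $d\deg\sigma$ neighbours). Inner products: on $\Omega^{d-1}$, $\langle f,g\rangle=\sum_{\sigma\in X^{d-1}}f(\sigma)g(\sigma)/\deg\sigma$;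 on $\Omega^k$, $k\ne d-1$, $\langle f,g\rangle=\sum_{\sigma\in X^k}f(\sigma)g(\sigma)$ (summands do not depend on the orientation chosen). Boundary maps $\partial_k:\Omega^k\to\Omega^{k-1}$: $(\partial_kf)(\sigma)=\sum_{v\triangleleft\sigma}f(v\sigma)$. Coboundary maps $\delta_k:\Omega^{k-1}\to\Omega^k$: for $\sigma=[\sigma_0,\dots,\sigma_k]$, writing $\sigma\setminus\sigma_i$ for $[\sigma_0,\dots,\widehat{\sigma_i},\dots,\sigma_k]$, $(\delta_kf)(\sigma)=\sum_{i=0}^k(-1)^if(\sigma\setminus\sigma_i)$ if $k\le d-2$, $(\delta_{d-1}f)(\sigma)=\deg\sigma\sum_{i=0}^{d-1}(-1)^if(\sigma\setminus\sigma_i)$, and $(\delta_df)(\sigma)=\sum_{i=0}^d(-1)^if(\sigma\setminus\sigma_i)/\deg(\sigma\setminus\sigma_i)$ (for finite $X$, $\delta_k$ is the adjoint of $\partial_k$). The upper Laplacian $\Delta^+=\partial_d\delta_d$ on $\Omega^{d-1}$ is given by $(\Delta^+f)(\sigma)=f(\sigma)-\sum_{\sigma'\sim\sigma}f(\sigma')/\deg\sigma'$. Closed forms: $Z^{d-1}=\ker\delta_d$. $X$ is $(d-1)$-connected if for all $\sigma,\sigma'\in X^{d-1}_\pm$ there is a chain $\sigma=\sigma_0\sim\sigma_1\sim\dots\sim\sigma_n=\sigma'$. The $(d-1)$-components of $X$ are the classes of the equivalence relation on $X^{d-1}$ generated by $\sigma\approx\sigma'$ whenever $\sigma\cup\sigma'\in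 X^d$; to a class $C$ one associates the subcomplex $X_C$ consisting of all $d$-cells containing a cell of $C$ together with all their subsets, and the component is called disorientable if $X_C$ is. A disorientation of a $d$-complex is a choice $X^d_+\subseteq X^d_\pm$ of exactly one orientation for each $d$-cell such that whenever two cells of $X^d_+$ intersect in a $(d-1)$-cell they induce the same orientation on it; the complex is disorientable if it has a disorientation. *)

theory Defs
  imports Complex_Main "HOL-Library.Function_Algebras" "HOL-Combinatorics.Permutations"
begin

definition simplicial_complex :: "'a set set \<Rightarrow> bool" where
  "simplicial_complex X \<longleftrightarrow> {} \<in> X \<and> (\<forall>\<sigma>\<in>X. finite \<sigma>) \<and> (\<forall>\<sigma>\<in>X. \<forall>\<tau>. \<tau> \<subseteq> \<sigma> \<longrightarrow> \<tau> \<in> X)"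

definition cells :: "'a set set \<Rightarrow> nat \<Rightarrow> 'a set set" where
  "cells X j = {\<sigma>\<in>X. card \<sigma> = j + 1}"

definition is_dcomplex :: "'a set set \<Rightarrow> nat \<Rightarrow> bool" where
  "is_dcomplex X d \<longleftrightarrow> simplicial_complex X \<and> cells X d \<noteq> {} \<and> (\<forall>\<sigma>\<in>X. card \<sigma> \<le> d + 1)"

definition uniform :: "'a set set \<Rightarrow> nat \<Rightarrow> bool" where
  "uniform X d \<longleftrightarrow> (\<forall>\<sigma>\<in>X. \<exists>\<tau>\<in>cells X d. \<sigma> \<subseteq> \<tau>)"

definition deg :: "'a set set \<Rightarrow> 'a set \<Rightarrow> nat" where
  "deg X \<sigma> = card {\<tau>\<in>X. \<sigma> \<subseteq> \<tau> \<and> card \<tau> = card \<sigma> + 1}"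

text \<open>Oriented j-cells are represented by vertex lists (orderings);
  two lists represent the same orientation iff they differ by an even permutation.\<close>
definition ocells :: "'a set set \<Rightarrow> nat \<Rightarrow> 'a list set" where
  "ocells X j = {xs. distinct xs \<and> set xs \<in> X \<and> length xs = j + 1}"

definition swap_at :: "'a list \<Rightarrow> nat \<Rightarrow> nat \<Rightarrow> 'a list" where
  "swap_at xs i k = xs[i := xs ! k, k := xs ! i]"

definition orient_eq :: "'a list \<Rightarrow> 'a list \<Rightarrow> bool" where
  "orient_eq xs ys \<longleftrightarrow> length ys = length xs \<and>
     (\<exists>p. p permutes {..<length xs} \<and> evenperm p \<and> ys = map (\<lambda>i. xs ! p i) [0..<length xs])"

definition opp :: "'a list \<Rightarrow> 'a list" where
  "opp xs = swap_at xs 0 1"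

text \<open>j-forms (j \<ge> 1): real functions on oriented j-cells, antisymmetric
  (f(opposite) = - f); represented as functions on lists vanishing off the oriented j-cells.\<close>
definition forms :: "'a set set \<Rightarrow> nat \<Rightarrow> ('a list \<Rightarrow> real) set" where
  "forms X j = {f. (\<forall>xs. xs \<notin> ocells X j \<longrightarrow> f xs = 0) \<and>
      (\<forall>xs\<in>ocells X j. \<forall>i<length xs. \<forall>k<length xs. i \<noteq> k \<longrightarrow> f (swap_at xs i k) = - f xs)}"

definition del_at :: "nat \<Rightarrow> 'a list \<Rightarrow> 'a list" where
  "del_at i xs = take i xs @ drop (Suc i) xs"

definition up_verts :: "'a set set \<Rightarrow> 'a list \<Rightarrow> 'a set" where
  "up_verts X \<sigma> = {v. v \<notin> set \<sigma> \<and> insert v (set \<sigma>) \<in> X}"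

definition bd :: "'a set set \<Rightarrow> nat \<Rightarrow> ('a list \<Rightarrow> real) \<Rightarrow> ('a list \<Rightarrow> real)" where
  "bd X k f = (\<lambda>\<sigma>. if \<sigma> \<in> ocells X (k - 1) then (\<Sum>v\<in>up_verts X \<sigma>. f (v # \<sigma>)) else 0)"

definition cobd_top :: "'a set set \<Rightarrow> nat \<Rightarrow> ('a list \<Rightarrow> real) \<Rightarrow> ('a list \<Rightarrow> real)" where
  "cobd_top X d f = (\<lambda>\<tau>. if \<tau> \<in> ocells X d then
      (\<Sum>i<d + 1. (-1) ^ i * f (del_at i \<tau>) / real (deg X (set (del_at i \<tau>)))) else 0)"

definition uplap :: "'a set set \<Rightarrow> nat \<Rightarrow> ('a list \<Rightarrow> real) \<Rightarrow> ('a list \<Rightarrow> real)" where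
  "uplap X d f = bd X d (cobd_top X d f)"

definition eigenspace_up :: "'a set set \<Rightarrow> nat \<Rightarrow> real \<Rightarrow> ('a list \<Rightarrow> real) set" where
  "eigenspace_up X d lam = {f\<in>forms X (d - 1). uplap X d f = (\<lambda>x. lam * f x)}"

definition eigenvalue_up :: "'a set set \<Rightarrow> nat \<Rightarrow> real \<Rightarrow> bool" where
  "eigenvalue_up X d lam \<longleftrightarrow> (\<exists>f\<in>eigenspace_up X d lam. f \<noteq> (\<lambda>_. 0))"

text \<open>multiplicity of lam in Spec \<Delta>^+ (dimension of the eigenspace; \<Delta>^+ is self-adjoint)\<close>
definition mult_up :: "'a set set \<Rightarrow> nat \<Rightarrow> real \<Rightarrow> nat" where
  "mult_up X d lam = vector_space.dim (\<lambda>(c::real) (f::'a list \<Rightarrow> real). (\<lambda>x. c * f x))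
      (eigenspace_up X d lam)"

definition adj :: "'a set set \<Rightarrow> nat \<Rightarrow> ('a set \<times> 'a set) set" where
  "adj X d = {(\<sigma>, \<sigma>'). \<sigma> \<in> cells X (d - 1) \<and> \<sigma>' \<in> cells X (d - 1) \<and> \<sigma> \<union> \<sigma>' \<in> cells X d}"

definition components :: "'a set set \<Rightarrow> nat \<Rightarrow> 'a set set set" where
  "components X d = cells X (d - 1) // ((adj X d)\<^sup>*)"

definition comp_complex :: "'a set set \<Rightarrow> nat \<Rightarrow> 'a set set \<Rightarrow> 'a set set" where
  "comp_complex X d C = {\<rho>. \<exists>\<tau>\<in>cells X d. (\<exists>c\<in>C. c \<subseteq> \<tau>) \<and> \<rho> \<subseteq> \<tau>}"

definition induces :: "'a list \<Rightarrow> 'a list \<Rightarrow> bool" where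
  "induces \<tau> \<sigma> \<longleftrightarrow> (\<exists>i<length \<tau>. orient_eq (del_at i \<tau>) (if even i then \<sigma> else opp \<sigma>))"

definition nbr :: "'a set set \<Rightarrow> nat \<Rightarrow> 'a list \<Rightarrow> 'a list \<Rightarrow> bool" where
  "nbr X d \<sigma> \<sigma>' \<longleftrightarrow> (\<exists>\<tau>\<in>ocells X d. induces \<tau> \<sigma> \<and> induces \<tau> (opp \<sigma>'))"

definition dconnected :: "'a set set \<Rightarrow> nat \<Rightarrow> bool" where
  "dconnected X d \<longleftrightarrow> (\<forall>\<sigma>\<in>ocells X (d - 1). \<forall>\<sigma>'\<in>ocells X (d - 1). (nbr X d)\<^sup>*\<^sup>* \<sigma> \<sigma>')"

text \<open>A disorientation X^d_+ is represented as the set of all lists representing the chosen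
  orientations: closed under even permutations, containing exactly one of t, opp t for each
  oriented d-cell t, and inducing the same orientation on common (d-1)-faces.\<close>
definition disorientation :: "'a set set \<Rightarrow> nat \<Rightarrow> 'a list set \<Rightarrow> bool" where
  "disorientation X d S \<longleftrightarrow> S \<subseteq> ocells X d \<and>
     (\<forall>t\<in>ocells X d. \<forall>t'. orient_eq t t' \<longrightarrow> (t \<in> S \<longleftrightarrow> t' \<in> S)) \<and>
     (\<forall>t\<in>ocells X d. t \<in> S \<longleftrightarrow> opp t \<notin> S) \<and>
     (\<forall>t\<in>S. \<forall>t'\<in>S. set t \<noteq> set t' \<and> card (set t \<inter> set t') = d \<longrightarrow>
        (\<exists>\<sigma>. induces t \<sigma> \<and> induces t' \<sigma>))"

definition disorientable :: "'a set set \<Rightarrow> nat \<Rightarrow> bool" where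
  "disorientable X d \<longleftrightarrow> (\<exists>S. disorientation X d S)"

definition disF :: "'a set set \<Rightarrow> nat \<Rightarrow> 'a list set \<Rightarrow> 'a list \<Rightarrow> real" where
  "disF X d S = (\<lambda>xs. if xs \<in> S then 1 else if xs \<in> ocells X d then -1 else 0)"

end

theory Submission
  imports Defs "HOL-Library.Disjoint_Sets"
begin

text \<open>
  Write \<open>\<delta>f(\<tau>) = \<Sum>\<^sub>i c\<^sub>i(\<tau>)\<close> with \<open>c\<^sub>i(\<tau>) = (-1)\<^sup>i f(\<tau> \<setminus> \<tau>\<^sub>i) / deg(\<tau> \<setminus> \<tau>\<^sub>i)\<close>.
  Moving the \<open>i\<close>-th vertex to the front is a bijection of the oriented \<open>d\<close>-cells, so
  \<open>\<langle>\<Delta>\<^sup>+f, f\<rangle> = \<parallel>\<delta>f\<parallel>\<^sup>2 / (d+1)\<close> and \<open>\<Sum>\<^sub>\<tau> c\<^sub>i(\<tau>)\<^sup>2 = \<parallel>f\<parallel>\<^sup>2\<close> for every \<open>i\<close>.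
  Hence \<open>\<Delta>\<^sup>+\<close> is positive semidefinite with kernel \<open>Z\<^sup>d\<^sup>-\<^sup>1\<close>, and Cauchy-Schwarz over the
  \<open>d+1\<close> summands gives \<open>\<parallel>\<delta>f\<parallel>\<^sup>2 \<le> (d+1)\<^sup>2\<parallel>f\<parallel>\<^sup>2\<close>, i.e. \<open>Spec \<Delta>\<^sup>+ \<subseteq> [0, d+1]\<close>.
  For an eigenform of \<open>d+1\<close> equality holds, so all \<open>c\<^sub>i(\<tau>)\<close> agree; then \<open>|f|/deg\<close> is
  constant along neighbours, on a \<open>(d-1)\<close>-connected complex \<open>\<delta>f\<close> vanishes nowhere, and the
  oriented \<open>d\<close>-cells where \<open>\<delta>f > 0\<close> form a disorientation. Conversely a disorientation \<open>F\<close>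
  takes the same value on all \<open>v\<sigma>\<close>, so \<open>\<partial>F(\<sigma>) = deg \<sigma> \<cdot> F(v\<sigma>)\<close> and \<open>\<delta>\<partial>F = (d+1)F\<close>.
  Finally \<open>\<Delta>\<^sup>+\<close> commutes with cutting a form down to a \<open>(d-1)\<close>-component \<open>C\<close>, and the
  eigenforms supported on \<open>C\<close> are exactly the eigenforms of \<open>X\<^sub>C\<close>; so bases of the
  eigenspaces of the \<open>X\<^sub>C\<close> together form a basis of the eigenspace of \<open>X\<close>.
\<close>

lemma length_del_at [simp]: "i < length xs \<Longrightarrow> length (del_at i xs) = length xs - 1"
  by (simp add: del_at_def)

lemma nth_del_at: "i < length xs \<Longrightarrow> m < length xs - 1 \<Longrightarrow>
    del_at i xs ! m = xs ! (if m < i then m else Suc m)"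
  by (auto simp: del_at_def nth_append min_def)

lemma del_at_0 [simp]: "del_at 0 xs = tl xs"
  by (simp add: del_at_def drop_Suc)

lemma distinct_del_at: "distinct xs \<Longrightarrow> distinct (del_at i xs)"
  unfolding del_at_def by (simp add: set_take_disj_set_drop_if_distinct)

lemma set_del_at: assumes "distinct xs" "i < length xs" shows "set (del_at i xs) = set xs - {xs ! i}"
proof -
  have xs: "xs = take i xs @ xs ! i # drop (Suc i) xs" using assms(2) by (simp add: id_take_nth_drop)
  have "set xs = set (take i xs) \<union> {xs ! i} \<union> set (drop (Suc i) xs)" by (subst xs) auto
  moreover have "distinct (take i xs @ xs ! i # drop (Suc i) xs)" using assms(1) xs by simp
  then have "xs ! i \<notin> set (take i xs) \<union> set (drop (Suc i) xs)" by auto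
  ultimately show ?thesis unfolding del_at_def by auto
qed

lemma set_del_at_subset: "set (del_at i xs) \<subseteq> set xs"
  unfolding del_at_def by (metis set_append set_drop_subset set_take_subset Un_least)

lemma length_swap_at [simp]: "length (swap_at xs i k) = length xs"
  by (simp add: swap_at_def)

lemma set_swap_at [simp]: "i < length xs \<Longrightarrow> k < length xs \<Longrightarrow> set (swap_at xs i k) = set xs"
  by (simp add: swap_at_def)

lemma distinct_swap_at [simp]:
  "i < length xs \<Longrightarrow> k < length xs \<Longrightarrow> distinct (swap_at xs i k) = distinct xs"
  by (simp add: swap_at_def)

lemma nth_swap_at: "i < length xs \<Longrightarrow> k < length xs \<Longrightarrow> m < length xs \<Longrightarrow>
    swap_at xs i k ! m = xs ! (if m = i then k else if m = k then i else m)"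
  by (auto simp: swap_at_def nth_list_update)

lemma swap_at_commute: "swap_at xs i k = swap_at xs k i"
  by (cases "i = k") (auto simp: swap_at_def list_update_swap)

lemma swap_at_Cons:
  "i < length xs \<Longrightarrow> k < length xs \<Longrightarrow> swap_at (v # xs) (Suc i) (Suc k) = v # swap_at xs i k"
  by (simp add: swap_at_def)

lemma swap_at_Suc_conv: "i < k \<Longrightarrow> Suc k < length xs \<Longrightarrow>
    swap_at xs i (Suc k) = swap_at (swap_at (swap_at xs k (Suc k)) i k) k (Suc k)"
  by (auto intro!: nth_equalityI simp: nth_swap_at)

lemma del_at_swap_at_less: "j < i \<Longrightarrow> Suc i < length xs \<Longrightarrow>
    del_at j (swap_at xs i (Suc i)) = swap_at (del_at j xs) (i - 1) i"
  by (auto intro!: nth_equalityI simp: nth_swap_at nth_del_at)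

lemma del_at_swap_at_greater: "Suc i < j \<Longrightarrow> j < length xs \<Longrightarrow>
    del_at j (swap_at xs i (Suc i)) = swap_at (del_at j xs) i (Suc i)"
  by (auto intro!: nth_equalityI simp: nth_swap_at nth_del_at)

lemma del_at_swap_at_left: "Suc i < length xs \<Longrightarrow> del_at i (swap_at xs i (Suc i)) = del_at (Suc i) xs"
  by (auto intro!: nth_equalityI simp: nth_swap_at nth_del_at less_Suc_eq)

lemma del_at_swap_at_right: "Suc i < length xs \<Longrightarrow> del_at (Suc i) (swap_at xs i (Suc i)) = del_at i xs"
  by (auto intro!: nth_equalityI simp: nth_swap_at nth_del_at less_Suc_eq)

lemma permute_list_transpose: "a < length xs \<Longrightarrow> b < length xs \<Longrightarrow>
    permute_list (Transposition.transpose a b) xs = swap_at xs a b"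
  by (auto intro!: nth_equalityI simp: permute_list_def nth_swap_at transpose_def)

definition move_front :: "nat \<Rightarrow> 'a list \<Rightarrow> 'a list" where
  "move_front i xs = xs ! i # del_at i xs"

lemma move_front_0: "xs \<noteq> [] \<Longrightarrow> move_front 0 xs = xs"
  by (simp add: move_front_def hd_conv_nth[symmetric])

lemma move_front_Suc:
  "Suc i < length xs \<Longrightarrow> move_front (Suc i) xs = move_front i (swap_at xs i (Suc i))"
  unfolding move_front_def by (auto intro!: nth_equalityI simp: nth_del_at nth_swap_at)

lemma length_move_front [simp]: "i < length xs \<Longrightarrow> length (move_front i xs) = length xs"
  by (auto simp: move_front_def)

lemma set_move_front: "distinct xs \<Longrightarrow> i < length xs \<Longrightarrow> set (move_front i xs) = set xs"
  by (auto simp: move_front_def set_del_at)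

lemma distinct_move_front: "distinct xs \<Longrightarrow> i < length xs \<Longrightarrow> distinct (move_front i xs)"
  by (auto simp: move_front_def set_del_at distinct_del_at)

lemma move_front_inj:
  assumes "i < length xs" "length ys = length xs" "move_front i xs = move_front i ys"
  shows "xs = ys"
proof (rule nth_equalityI)
  show "length xs = length ys" using assms by simp
  have h: "xs ! i = ys ! i" "del_at i xs = del_at i ys" using assms by (auto simp: move_front_def)
  fix m assume m: "m < length xs"
  consider "m = i" | "m < i" | m' where "m = Suc m'" "i \<le> m'"
    by (metis less_Suc_eq_le linorder_neqE_nat not0_implies_Suc not_less_zero)
  then show "xs ! m = ys ! m"
  proof cases
    case 2 then show ?thesis using nth_del_at[of i xs m] nth_del_at[of i ys m] assms h m by auto
  next
    case 3 then show ?thesis using nth_del_at[of i xs m'] nth_del_at[of i ys m'] assms h m by auto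
  qed (use h in simp)
qed

lemma length_ocells: "xs \<in> ocells X k \<Longrightarrow> length xs = Suc k"
  by (simp add: ocells_def)

lemma card_set_ocells: "xs \<in> ocells X k \<Longrightarrow> card (set xs) = Suc k"
  by (auto simp: ocells_def distinct_card)

lemma set_ocells_in_cells: "xs \<in> ocells X k \<Longrightarrow> set xs \<in> cells X k"
  by (auto simp: ocells_def cells_def distinct_card)

lemma ocells_swap_at:
  "xs \<in> ocells X k \<Longrightarrow> i < length xs \<Longrightarrow> j < length xs \<Longrightarrow> swap_at xs i j \<in> ocells X k"
  by (simp add: ocells_def)

lemma form_swap_at: "f \<in> forms X k \<Longrightarrow> xs \<in> ocells X k \<Longrightarrow> i < length xs \<Longrightarrow> j < length xs \<Longrightarrow>
    i \<noteq> j \<Longrightarrow> f (swap_at xs i j) = - f xs"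
  by (simp add: forms_def)

lemma form_zero_outside: "f \<in> forms X k \<Longrightarrow> xs \<notin> ocells X k \<Longrightarrow> f xs = 0"
  by (simp add: forms_def)

lemma form_swap_at_of_adjacent:
  fixes f :: "'a list \<Rightarrow> real"
  assumes adjacent: "\<And>xs i. xs \<in> ocells X k \<Longrightarrow> Suc i < length xs \<Longrightarrow> f (swap_at xs i (Suc i)) = - f xs"
    and "xs \<in> ocells X k" "i < j" "j < length xs"
  shows "f (swap_at xs i j) = - f xs"
  using assms(4,2,3)
proof (induction j arbitrary: xs)
  case 0 then show ?case by simp
next
  case (Suc m xs)
  show ?case
  proof (cases "i = m")
    case True then show ?thesis using Suc adjacent by simp
  next
    case False
    then have im: "i < m" using Suc by simp
    define ys where "ys = swap_at xs m (Suc m)"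
    define zs where "zs = swap_at ys i m"
    have ys: "ys \<in> ocells X k" "f ys = - f xs"
      using Suc adjacent ocells_swap_at[of xs X k m "Suc m"] unfolding ys_def by auto
    have zs: "zs \<in> ocells X k" "f zs = - f ys"
      unfolding zs_def using Suc.IH[of ys] ys im Suc.prems by (auto intro: ocells_swap_at simp: ys_def)
    have "f (swap_at xs i (Suc m)) = f (swap_at zs m (Suc m))"
      using swap_at_Suc_conv[OF im Suc.prems(1)] by (simp add: ys_def zs_def)
    also have "\<dots> = - f zs" using adjacent[OF zs(1)] Suc.prems by (simp add: zs_def ys_def)
    finally show ?thesis using ys zs by simp
  qed
qed

lemma formsI_adjacent:
  assumes "\<And>xs i. xs \<in> ocells X k \<Longrightarrow> Suc i < length xs \<Longrightarrow> f (swap_at xs i (Suc i)) = - f xs"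
    and "\<And>xs. xs \<notin> ocells X k \<Longrightarrow> f xs = 0"
  shows "f \<in> forms X k"
  unfolding forms_def
proof safe
  fix xs i j assume "xs \<in> ocells X k" "i < length xs" "j < length xs" "i \<noteq> j"
  then show "f (swap_at xs i j) = - f xs"
    using form_swap_at_of_adjacent[OF assms(1)] swap_at_commute by (metis linorder_neq_iff)
qed (use assms(2) in auto)

lemma form_move_front:
  "f \<in> forms X k \<Longrightarrow> xs \<in> ocells X k \<Longrightarrow> i < length xs \<Longrightarrow> f (move_front i xs) = (-1) ^ i * f xs"
proof (induction i arbitrary: xs)
  case 0 then show ?case by (auto simp: move_front_0)
next
  case (Suc i)
  have "f (move_front (Suc i) xs) = f (move_front i (swap_at xs i (Suc i)))"
    using Suc by (simp add: move_front_Suc)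
  also have "\<dots> = (-1) ^ i * f (swap_at xs i (Suc i))"
    using Suc by (intro Suc.IH ocells_swap_at) auto
  also have "\<dots> = (-1) ^ Suc i * f xs" using Suc form_swap_at[OF Suc.prems(1,2), of i "Suc i"] by simp
  finally show ?case .
qed

lemma form_permute_list:
  assumes f: "f \<in> forms X k" and xs: "xs \<in> ocells X k" and p: "p permutes {..<length xs}"
  shows "permute_list p xs \<in> ocells X k \<and> f (permute_list p xs) = real_of_int (sign p) * f xs"
  using finite_lessThan p
proof (induction p rule: permutes_rev_induct)
  case id then show ?case using xs by (simp add: sign_def)
next
  case (swap a b p)
  have pt: "permute_list (p \<circ> Transposition.transpose a b) xs = swap_at (permute_list p xs) a b"
    using swap by (simp add: permute_list_compose permutes_swap_id permute_list_transpose)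
  have sg: "sign (p \<circ> Transposition.transpose a b) = - sign p"
    using swap by (simp add: sign_compose permutes_imp_permutation[OF finite_lessThan] sign_swap_id
      permutation_swap_id)
  show ?case unfolding pt sg using swap form_swap_at[OF f, of "permute_list p xs" a b]
    by (simp add: ocells_swap_at)
qed

lemma orient_eq_permute_list:
  "orient_eq xs ys \<Longrightarrow> \<exists>p. p permutes {..<length xs} \<and> evenperm p \<and> ys = permute_list p xs"
  by (auto simp: orient_eq_def permute_list_def)

lemma orient_eq_permute_listI:
  "p permutes {..<length xs} \<Longrightarrow> evenperm p \<Longrightarrow> orient_eq xs (permute_list p xs)"
  by (auto simp: orient_eq_def permute_list_def)

lemma orient_eq_refl: "orient_eq xs xs"
  unfolding orient_eq_def by (auto intro!: exI[of _ id] simp: map_nth)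

lemma set_orient_eq: "orient_eq xs ys \<Longrightarrow> set ys = set xs"
  using orient_eq_permute_list by (metis set_permute_list)

lemma ocells_orient_eq: "xs \<in> ocells X k \<Longrightarrow> orient_eq xs ys \<Longrightarrow> ys \<in> ocells X k"
  using orient_eq_permute_list[of xs ys] by (auto simp: ocells_def)

lemma form_orient_eq: "f \<in> forms X k \<Longrightarrow> xs \<in> ocells X k \<Longrightarrow> orient_eq xs ys \<Longrightarrow> f ys = f xs"
  using orient_eq_permute_list form_permute_list by (fastforce simp: sign_def)

lemma orient_eq_if_same_sign:
  assumes f: "f \<in> forms X k" and xs: "xs \<in> ocells X k" and ys: "ys \<in> ocells X k"
    and "set xs = set ys" and "f xs * f ys > 0"
  shows "orient_eq xs ys"
proof -
  have "mset ys = mset xs" using assms by (simp add: ocells_def set_eq_iff_mset_eq_distinct)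
  then obtain p where p: "p permutes {..<length xs}" "permute_list p xs = ys"
    using mset_eq_permutation by metis
  have "f ys = real_of_int (sign p) * f xs" using form_permute_list[OF f xs p(1)] p(2) by simp
  then have "evenperm p" using assms(5) by (cases "evenperm p") (auto simp: sign_def mult_less_0_iff)
  then show ?thesis using orient_eq_permute_listI[OF p(1)] p(2) by simp
qed

lemma permutes_eq_if_permute_list_eq:
  assumes "distinct xs" "p permutes {..<length xs}" "q permutes {..<length xs}"
    and "permute_list p xs = permute_list q xs"
  shows "p = q"
proof
  fix i show "p i = q i"
  proof (cases "i < length xs")
    case True
    have "xs ! p i = xs ! q i"
      using assms(4) permute_list_nth[OF assms(2) True] permute_list_nth[OF assms(3) True] by simp
    moreover have "p i < length xs" "q i < length xs"
      using True assms(2,3) permutes_in_image by fastforce+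
    ultimately show ?thesis using assms(1) nth_eq_iff_index_eq by blast
  qed (use assms(2,3) in \<open>simp add: permutes_def\<close>)
qed

lemma permutes_transpose_01: "Suc 0 < n \<Longrightarrow> Transposition.transpose 0 1 permutes {..<n}"
  by (intro permutes_swap_id) auto

lemma opp_eq_permute_list: "Suc 0 < length xs \<Longrightarrow> opp xs = permute_list (Transposition.transpose 0 1) xs"
  unfolding opp_def by (rule permute_list_transpose[symmetric]) auto

lemma length_opp [simp]: "length (opp xs) = length xs"
  by (simp add: opp_def)

lemma set_opp: "Suc 0 < length xs \<Longrightarrow> set (opp xs) = set xs"
  by (metis One_nat_def Suc_lessD opp_def set_swap_at)

lemma opp_opp: "Suc 0 < length xs \<Longrightarrow> opp (opp xs) = xs"
  by (cases xs; cases "tl xs") (auto simp: opp_def swap_at_def)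

lemma ocells_opp: "xs \<in> ocells X k \<Longrightarrow> Suc 0 < length xs \<Longrightarrow> opp xs \<in> ocells X k"
  unfolding opp_def by (rule ocells_swap_at) auto

lemma ocells_opp_iff: "Suc 0 < length xs \<Longrightarrow> opp xs \<in> ocells X k \<longleftrightarrow> xs \<in> ocells X k"
  using ocells_opp opp_opp by (metis length_opp)

lemma form_opp: "f \<in> forms X k \<Longrightarrow> xs \<in> ocells X k \<Longrightarrow> Suc 0 < length xs \<Longrightarrow> f (opp xs) = - f xs"
  unfolding opp_def by (rule form_swap_at) auto

lemma form_opp_if: "f \<in> forms X k \<Longrightarrow> xs \<in> ocells X k \<Longrightarrow> Suc 0 < length xs \<Longrightarrow>
    f (if even i then xs else opp xs) = (-1) ^ i * f xs"
  using form_opp by auto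

lemma not_orient_eq_opp:
  assumes "distinct xs" "Suc 0 < length xs" "orient_eq xs ys"
  shows "\<not> orient_eq xs (opp ys)"
proof
  assume "orient_eq xs (opp ys)"
  then obtain q where q: "q permutes {..<length xs}" "evenperm q" "opp ys = permute_list q xs"
    using orient_eq_permute_list by blast
  obtain p where p: "p permutes {..<length xs}" "evenperm p" "ys = permute_list p xs"
    using orient_eq_permute_list[OF assms(3)] by blast
  let ?t = "Transposition.transpose (0::nat) 1"
  have t: "?t permutes {..<length xs}" using permutes_transpose_01[OF assms(2)] .
  have "opp ys = permute_list (p \<circ> ?t) xs"
    using opp_eq_permute_list[of ys] assms(2) p permute_list_compose[OF t] by simp
  then have "q = p \<circ> ?t"
    using permutes_eq_if_permute_list_eq[OF assms(1) q(1)] q(3) permutes_compose[OF t p(1)] by simp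
  then have "evenperm q = (evenperm p = evenperm ?t)"
    using evenperm_comp[OF permutes_imp_permutation[OF finite_lessThan p(1)] permutation_swap_id]
    by simp
  then show False using p q by (simp add: evenperm_swap)
qed

lemma induces_face:
  assumes "induces \<tau> \<sigma>" "Suc (Suc 0) < length \<tau>"
  obtains i where "i < length \<tau>" "set (del_at i \<tau>) = set \<sigma>"
    "orient_eq (del_at i \<tau>) (if even i then \<sigma> else opp \<sigma>)"
proof -
  obtain i where i: "i < length \<tau>" "orient_eq (del_at i \<tau>) (if even i then \<sigma> else opp \<sigma>)"
    using assms(1) by (auto simp: induces_def)
  have "length (if even i then \<sigma> else opp \<sigma>) = length \<tau> - 1"
    using i by (simp add: orient_eq_def)
  then have "Suc 0 < length \<sigma>" using assms(2) by (auto split: if_splits)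
  then have "set (if even i then \<sigma> else opp \<sigma>) = set \<sigma>" by (simp add: set_opp)
  then show thesis using that i set_orient_eq[OF i(2)] by auto
qed

lemma set_induced_subset: "induces \<tau> \<rho> \<Longrightarrow> Suc (Suc 0) < length \<tau> \<Longrightarrow> set \<rho> \<subseteq> set \<tau>"
  by (metis induces_face set_del_at_subset)

lemma sum_sum_sq_diff:
  fixes a :: "'b \<Rightarrow> real"
  shows "(\<Sum>i\<in>A. \<Sum>j\<in>A. (a i - a j)\<^sup>2) = 2 * (real (card A) * (\<Sum>i\<in>A. (a i)\<^sup>2) - (\<Sum>i\<in>A. a i)\<^sup>2)"
proof -
  have "(\<Sum>i\<in>A. \<Sum>j\<in>A. (a i - a j)\<^sup>2) = (\<Sum>i\<in>A. \<Sum>j\<in>A. (a i)\<^sup>2 + (a j)\<^sup>2 - 2 * (a i * a j))"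
    by (simp add: power2_diff mult.assoc)
  also have "\<dots> = (\<Sum>i\<in>A. real (card A) * (a i)\<^sup>2 + (\<Sum>j\<in>A. (a j)\<^sup>2) - 2 * (a i * (\<Sum>j\<in>A. a j)))"
    by (simp add: sum.distrib sum_subtractf sum_distrib_left)
  also have "\<dots> = real (card A) * (\<Sum>i\<in>A. (a i)\<^sup>2) + real (card A) * (\<Sum>j\<in>A. (a j)\<^sup>2)
      - 2 * ((\<Sum>i\<in>A. a i) * (\<Sum>j\<in>A. a j))"
    by (simp add: sum.distrib sum_subtractf sum_distrib_left sum_distrib_right mult.commute)
  finally show ?thesis by (simp add: power2_eq_square algebra_simps)
qed

lemma sq_sum_le_card_mult_sum_sq:
  fixes a :: "'b \<Rightarrow> real"
  shows "(\<Sum>i\<in>A. a i)\<^sup>2 \<le> real (card A) * (\<Sum>i\<in>A. (a i)\<^sup>2)"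
proof -
  have "0 \<le> (\<Sum>i\<in>A. \<Sum>j\<in>A. (a i - a j)\<^sup>2)" by (intro sum_nonneg) auto
  then show ?thesis using sum_sum_sq_diff[of a A] by simp
qed

lemma eq_if_sq_sum_eq_card_mult_sum_sq:
  fixes a :: "'b \<Rightarrow> real"
  assumes "finite A" "(\<Sum>i\<in>A. a i)\<^sup>2 = real (card A) * (\<Sum>i\<in>A. (a i)\<^sup>2)" "i \<in> A" "j \<in> A"
  shows "a i = a j"
proof -
  have "(\<Sum>i\<in>A. \<Sum>j\<in>A. (a i - a j)\<^sup>2) = 0" using sum_sum_sq_diff[of a A] assms(2) by simp
  then have "(\<Sum>j\<in>A. (a i - a j)\<^sup>2) = 0"
    using assms(1,3) sum_nonneg_eq_0_iff[of A "\<lambda>i. \<Sum>j\<in>A. (a i - a j)\<^sup>2"] by (simp add: sum_nonneg)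
  then have "(a i - a j)\<^sup>2 = 0"
    using assms(1,4) sum_nonneg_eq_0_iff[of A "\<lambda>j. (a i - a j)\<^sup>2"] by simp
  then show ?thesis by simp
qed

interpretation fun_space: vector_space "\<lambda>(c::real) (f::'b \<Rightarrow> real) x. c * f x"
  by unfold_locales (auto simp: fun_eq_iff algebra_simps)

lemma sum_fun_apply: "sum g A x = (\<Sum>a\<in>A. g a x)"
  by (induction A rule: infinite_finite_induct) auto

lemma in_span_indicators:
  assumes "finite S" "\<And>x. x \<notin> S \<Longrightarrow> f x = 0"
  shows "f \<in> fun_space.span ((\<lambda>s y. if y = s then 1 else 0) ` S)"
proof -
  have "f = (\<Sum>s\<in>S. (\<lambda>y. f s * (if y = s then 1 else 0)))"
    using assms by (auto simp: fun_eq_iff sum_fun_apply if_distrib cong: if_cong)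
  also have "\<dots> \<in> fun_space.span ((\<lambda>s y. if y = s then 1 else 0) ` S)"
    by (intro fun_space.span_sum fun_space.span_scale fun_space.span_base) auto
  finally show ?thesis .
qed

definition zero_outside :: "'b set \<Rightarrow> ('b \<Rightarrow> real) \<Rightarrow> 'b \<Rightarrow> real" where
  "zero_outside A f = (\<lambda>x. if x \<in> A then f x else 0)"

lemma zero_outside_idem [simp]: "zero_outside A (zero_outside A f) = zero_outside A f"
  by (simp add: zero_outside_def fun_eq_iff)

lemma zero_outside_disjoint:
  "A \<inter> B = {} \<Longrightarrow> zero_outside B f = f \<Longrightarrow> zero_outside A f = 0"
  by (auto simp: zero_outside_def fun_eq_iff) (metis disjoint_iff)

lemma sum_zero_outside:
  assumes "finite I" "disjoint_family_on A I" "\<And>x. f x \<noteq> 0 \<Longrightarrow> x \<in> (\<Union>i\<in>I. A i)"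
  shows "f = (\<Sum>i\<in>I. zero_outside (A i) f)"
proof
  fix x
  show "f x = (\<Sum>i\<in>I. zero_outside (A i) f) x"
  proof (cases "f x = 0")
    case False
    then obtain i where i: "i \<in> I" "x \<in> A i" using assms(3) by blast
    have "(\<Sum>j\<in>I. zero_outside (A j) f x) = (\<Sum>j\<in>I. if j = i then f x else 0)"
      using assms(2) i by (intro sum.cong) (auto simp: zero_outside_def disjoint_family_on_def)
    then show ?thesis using i assms(1) by (simp add: sum_fun_apply)
  next
    case True
    then have "zero_outside (A i) f x = 0" for i by (simp add: zero_outside_def)
    then show ?thesis using True by (simp add: sum_fun_apply)
  qed
qed

lemma independent_UN_zero_outside:
  assumes "disjoint_family_on A I"
    and indep: "\<And>i. i \<in> I \<Longrightarrow> fun_space.independent (B i)"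
    and supp: "\<And>i b. i \<in> I \<Longrightarrow> b \<in> B i \<Longrightarrow> zero_outside (A i) b = b"
  shows "fun_space.independent (\<Union>i\<in>I. B i)"
proof
  assume "fun_space.dependent (\<Union>i\<in>I. B i)"
  then obtain t u b0 where t: "finite t" "t \<subseteq> (\<Union>i\<in>I. B i)" "(\<Sum>v\<in>t. (\<lambda>x. u v * v x)) = 0"
      "b0 \<in> t" "u b0 \<noteq> 0"
    unfolding fun_space.dependent_explicit by blast
  obtain i0 where i0: "i0 \<in> I" "b0 \<in> B i0" using t(2,4) by auto
  have cut: "zero_outside (A i0) v = (if v \<in> B i0 then v else 0)" if v: "v \<in> t" for v
  proof -
    obtain i where i: "i \<in> I" "v \<in> B i" using t(2) v by auto
    show ?thesis
    proof (cases "v \<in> B i0")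
      case False
      then have "i \<noteq> i0" using i by auto
      then have "A i0 \<inter> A i = {}" using assms(1) i0 i by (auto simp: disjoint_family_on_def)
      then show ?thesis using zero_outside_disjoint supp[OF i] False by auto
    qed (use supp[OF i0(1)] in auto)
  qed
  have "(\<Sum>v\<in>t \<inter> B i0. (\<lambda>x. u v * v x)) = 0"
  proof
    fix x
    have "(\<Sum>v\<in>t \<inter> B i0. u v * v x) = (\<Sum>v\<in>t. if v \<in> B i0 then u v * v x else 0)"
      using t(1) by (simp add: sum.inter_restrict)
    also have "\<dots> = (\<Sum>v\<in>t. u v * zero_outside (A i0) v x)"
      by (rule sum.cong) (simp_all add: cut)
    also have "\<dots> = zero_outside (A i0) (\<lambda>x. \<Sum>v\<in>t. u v * v x) x"
      by (simp add: zero_outside_def)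
    also have "\<dots> = 0" using t(3) by (simp add: zero_outside_def sum_fun_apply fun_eq_iff)
    finally show "(\<Sum>v\<in>t \<inter> B i0. (\<lambda>x. u v * v x)) x = 0 x" by (simp add: sum_fun_apply)
  qed
  then have "u b0 = 0"
    using fun_space.independentD[OF indep[OF i0(1)], of "t \<inter> B i0" u b0] t(1,4) i0(2) by blast
  then show False using t by simp
qed

lemma fun_space_bases_exist:
  fixes E :: "'i \<Rightarrow> ('b \<Rightarrow> real) set"
  obtains B where "\<And>i. B i \<subseteq> E i" "\<And>i. fun_space.independent (B i)"
    "\<And>i. E i \<subseteq> fun_space.span (B i)" "\<And>i. card (B i) = fun_space.dim (E i)"
proof -
  have "\<forall>i. \<exists>B. B \<subseteq> E i \<and> fun_space.independent B \<and> E i \<subseteq> fun_space.span B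
      \<and> card B = fun_space.dim (E i)"
  proof
    fix i
    obtain B where "B \<subseteq> E i" "fun_space.independent B" "E i \<subseteq> fun_space.span B"
        "card B = fun_space.dim (E i)"
      by (rule fun_space.basis_exists)
    then show "\<exists>B. B \<subseteq> E i \<and> fun_space.independent B \<and> E i \<subseteq> fun_space.span B
        \<and> card B = fun_space.dim (E i)" by blast
  qed
  then obtain B where "\<forall>i. B i \<subseteq> E i \<and> fun_space.independent (B i) \<and>
      E i \<subseteq> fun_space.span (B i) \<and> card (B i) = fun_space.dim (E i)"
    using choice[of "\<lambda>i B. B \<subseteq> E i \<and> fun_space.independent B \<and> E i \<subseteq> fun_space.span B
        \<and> card B = fun_space.dim (E i)"] by blast
  then show thesis using that by blast
qed

lemma dim_eq_sum_dim_zero_outside: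
  fixes E :: "('b \<Rightarrow> real) set"
  assumes "finite I" "disjoint_family_on A I"
    and fin: "finite S" "E \<subseteq> fun_space.span S"
    and cover: "\<And>f x. f \<in> E \<Longrightarrow> f x \<noteq> 0 \<Longrightarrow> x \<in> (\<Union>i\<in>I. A i)"
    and closed: "\<And>i f. i \<in> I \<Longrightarrow> f \<in> E \<Longrightarrow> zero_outside (A i) f \<in> E"
  shows "fun_space.dim E = (\<Sum>i\<in>I. fun_space.dim {f\<in>E. zero_outside (A i) f = f})"
proof -
  let ?E = "\<lambda>i. {f\<in>E. zero_outside (A i) f = f}"
  obtain B where B: "\<And>i. B i \<subseteq> ?E i" "\<And>i. fun_space.independent (B i)"
      "\<And>i. ?E i \<subseteq> fun_space.span (B i)" "\<And>i. card (B i) = fun_space.dim (?E i)"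
    using fun_space_bases_exist[of ?E] by blast
  have finB: "finite (B i)" for i
    using fun_space.independent_span_bound[OF fin(1) B(2)] B(1) fin(2) by blast
  have disjB: "B i \<inter> B j = {}" if "i \<in> I" "j \<in> I" "i \<noteq> j" for i j
  proof -
    have "A i \<inter> A j = {}" using assms(2) that by (auto simp: disjoint_family_on_def)
    then have "b = 0" if "b \<in> B i" "b \<in> B j" for b
      using zero_outside_disjoint[of "A i" "A j" b] B(1) that by force
    then show ?thesis using fun_space.dependent_zero B(2) by blast
  qed
  have span: "E \<subseteq> fun_space.span (\<Union>i\<in>I. B i)"
  proof
    fix f assume f: "f \<in> E"
    have "zero_outside (A i) f \<in> fun_space.span (\<Union>i\<in>I. B i)" if "i \<in> I" for i
    proof -
      have "zero_outside (A i) f \<in> ?E i" using closed[OF that f] by simp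
      moreover have "B i \<subseteq> (\<Union>i\<in>I. B i)" using that by blast
      ultimately show ?thesis using B(3) fun_space.span_mono by blast
    qed
    then have "(\<Sum>i\<in>I. zero_outside (A i) f) \<in> fun_space.span (\<Union>i\<in>I. B i)"
      by (intro fun_space.span_sum)
    then show "f \<in> fun_space.span (\<Union>i\<in>I. B i)"
      by (subst sum_zero_outside[OF assms(1,2) cover[OF f]])
  qed
  have sub: "(\<Union>i\<in>I. B i) \<subseteq> E" using B(1) by blast
  have indep: "fun_space.independent (\<Union>i\<in>I. B i)"
    using B(1) by (intro independent_UN_zero_outside[OF assms(2) B(2)]) blast
  have "fun_space.dim E = card (\<Union>i\<in>I. B i)"
    using fun_space.dim_unique[OF sub span indep refl] .
  also have "\<dots> = (\<Sum>i\<in>I. card (B i))"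
    using assms(1) finB disjB by (intro card_UN_disjoint) auto
  finally show ?thesis using B(4) by simp
qed

locale finite_uniform_complex =
  fixes X :: "'a set set" and d :: nat
  assumes two_le_d: "2 \<le> d" and finite_X: "finite X"
    and dcomplex: "is_dcomplex X d" and uniform: "uniform X d"
begin

lemma Suc_pred_d [simp]: "Suc (d - Suc 0) = d"
  using two_le_d by simp

lemma subset_in_X: "\<sigma> \<in> X \<Longrightarrow> \<rho> \<subseteq> \<sigma> \<Longrightarrow> \<rho> \<in> X"
  using dcomplex by (auto simp: is_dcomplex_def simplicial_complex_def)

lemma finite_cell: "\<sigma> \<in> X \<Longrightarrow> finite \<sigma>"
  using dcomplex by (auto simp: is_dcomplex_def simplicial_complex_def)

lemma finite_vertices: "finite (\<Union>X)"
  using finite_X finite_cell by auto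

lemma finite_ocells: "finite (ocells X k)"
proof -
  have "ocells X k \<subseteq> {xs. set xs \<subseteq> \<Union>X \<and> length xs = Suc k}"
    by (auto simp: ocells_def)
  then show ?thesis using finite_lists_length_eq[OF finite_vertices] finite_subset by blast
qed

lemma finite_up_verts: "finite (up_verts X \<sigma>)"
  by (rule finite_subset[OF _ finite_vertices]) (auto simp: up_verts_def)

lemma length_low_ocells: "\<sigma> \<in> ocells X (d - 1) \<Longrightarrow> length \<sigma> = d"
  by (simp add: ocells_def)

lemma one_less_length_low_ocells: "\<sigma> \<in> ocells X (d - 1) \<Longrightarrow> Suc 0 < length \<sigma>"
  using two_le_d by (simp add: ocells_def)

lemma del_at_ocells: "\<tau> \<in> ocells X d \<Longrightarrow> i < Suc d \<Longrightarrow> del_at i \<tau> \<in> ocells X (d - 1)"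
  using set_del_at_subset[of i \<tau>] subset_in_X two_le_d by (auto simp: ocells_def distinct_del_at)

lemma move_front_ocells: "\<tau> \<in> ocells X k \<Longrightarrow> i < Suc k \<Longrightarrow> move_front i \<tau> \<in> ocells X k"
  by (auto simp: ocells_def set_move_front distinct_move_front)

lemma Cons_ocells: "\<sigma> \<in> ocells X (d - 1) \<Longrightarrow> v \<in> up_verts X \<sigma> \<Longrightarrow> v # \<sigma> \<in> ocells X d"
  by (auto simp: ocells_def up_verts_def)

lemma nth_up_verts_del_at:
  assumes "\<tau> \<in> ocells X d" "i < Suc d"
  shows "\<tau> ! i \<in> up_verts X (del_at i \<tau>)"
  using assms set_del_at[of \<tau> i] by (auto simp: up_verts_def ocells_def insert_absorb)

lemma ex_ocells_top: "ocells X d \<noteq> {}"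
proof -
  obtain c where c: "c \<in> cells X d" using dcomplex by (auto simp: is_dcomplex_def)
  then have "finite c" using finite_cell by (auto simp: cells_def)
  then obtain xs where "set xs = c" "distinct xs" using finite_distinct_list by blast
  then have "xs \<in> ocells X d" using c by (auto simp: ocells_def cells_def distinct_card)
  then show ?thesis by blast
qed

lemma deg_eq_card_up_verts:
  assumes "\<sigma> \<in> ocells X k"
  shows "deg X (set \<sigma>) = card (up_verts X \<sigma>)"
proof -
  let ?s = "set \<sigma>"
  have "{\<tau>\<in>X. ?s \<subseteq> \<tau> \<and> card \<tau> = card ?s + 1} = (\<lambda>v. insert v ?s) ` up_verts X \<sigma>"
  proof safe
    fix \<tau> assume t: "\<tau> \<in> X" "?s \<subseteq> \<tau>" "card \<tau> = card ?s + 1"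
    then have "card (\<tau> - ?s) = 1" using finite_cell by (simp add: card_Diff_subset finite_subset)
    then obtain v where v: "\<tau> - ?s = {v}" by (auto simp: card_Suc_eq)
    then have "\<tau> = insert v ?s" using t by auto
    moreover have "v \<in> up_verts X \<sigma>" using v t \<open>\<tau> = insert v ?s\<close> by (auto simp: up_verts_def)
    ultimately show "\<tau> \<in> (\<lambda>v. insert v ?s) ` up_verts X \<sigma>" by auto
  next
    fix v assume "v \<in> up_verts X \<sigma>"
    then show "insert v ?s \<in> X" "card (insert v ?s) = card ?s + 1"
      by (auto simp: up_verts_def)
  qed
  moreover have "inj_on (\<lambda>v. insert v ?s) (up_verts X \<sigma>)"
    by (auto simp: inj_on_def up_verts_def)
  ultimately show ?thesis unfolding deg_def by (simp add: card_image)
qed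

lemma up_verts_nonempty:
  assumes "\<sigma> \<in> ocells X (d - 1)"
  shows "up_verts X \<sigma> \<noteq> {}"
proof -
  have "set \<sigma> \<in> X" using assms by (auto simp: ocells_def)
  then obtain \<tau> where t: "\<tau> \<in> cells X d" "set \<sigma> \<subseteq> \<tau>" using uniform by (auto simp: uniform_def)
  have "card (set \<sigma>) = d" using card_set_ocells[OF assms] by simp
  moreover have "card \<tau> = Suc d" "\<tau> \<in> X" using t by (auto simp: cells_def)
  ultimately have "\<not> \<tau> \<subseteq> set \<sigma>" by (metis Suc_n_not_le_n card_mono List.finite_set)
  then obtain v where v: "v \<in> \<tau>" "v \<notin> set \<sigma>" by auto
  have "insert v (set \<sigma>) \<in> X" using subset_in_X[OF \<open>\<tau> \<in> X\<close>] v t by auto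
  then show ?thesis using v by (auto simp: up_verts_def)
qed

lemma deg_pos: "\<sigma> \<in> ocells X (d - 1) \<Longrightarrow> 0 < deg X (set \<sigma>)"
  using deg_eq_card_up_verts up_verts_nonempty finite_up_verts by (simp add: card_gt_0_iff)

lemma bij_betw_move_front: "i < Suc k \<Longrightarrow> bij_betw (move_front i) (ocells X k) (ocells X k)"
proof -
  assume i: "i < Suc k"
  have inj: "inj_on (move_front i) (ocells X k)"
    using i by (auto simp: inj_on_def ocells_def intro: move_front_inj)
  moreover have "move_front i ` ocells X k \<subseteq> ocells X k" using move_front_ocells i by auto
  ultimately have "move_front i ` ocells X k = ocells X k"
    using finite_ocells card_image[OF inj] by (simp add: card_subset_eq)
  then show ?thesis using inj by (simp add: bij_betw_def)
qed

lemma sum_move_front: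
  "i < Suc k \<Longrightarrow> (\<Sum>\<tau>\<in>ocells X k. h (move_front i \<tau>)) = (\<Sum>\<tau>\<in>ocells X k. h \<tau> :: real)"
  using sum.reindex_bij_betw[OF bij_betw_move_front] by blast

lemma sum_Cons_up_verts:
  "(\<Sum>\<sigma>\<in>ocells X (d - 1). \<Sum>v\<in>up_verts X \<sigma>. h (v # \<sigma>)) = (\<Sum>\<tau>\<in>ocells X d. h \<tau> :: real)"
proof -
  have "(\<Sum>\<sigma>\<in>ocells X (d - 1). \<Sum>v\<in>up_verts X \<sigma>. h (v # \<sigma>)) =
      (\<Sum>p\<in>Sigma (ocells X (d - 1)) (up_verts X). h (snd p # fst p))"
    by (subst sum.Sigma) (auto simp: finite_ocells finite_up_verts case_prod_beta)
  also have "\<dots> = (\<Sum>\<tau>\<in>ocells X d. h \<tau>)"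
  proof (rule sum.reindex_bij_witness[where i = "\<lambda>\<tau>. (tl \<tau>, hd \<tau>)" and j = "\<lambda>p. snd p # fst p"])
    fix \<tau> assume t: "\<tau> \<in> ocells X d"
    then obtain v s where vs: "\<tau> = v # s" by (cases \<tau>) (auto simp: ocells_def)
    then show "snd (tl \<tau>, hd \<tau>) # fst (tl \<tau>, hd \<tau>) = \<tau>" by simp
    show "(tl \<tau>, hd \<tau>) \<in> Sigma (ocells X (d - 1)) (up_verts X)"
      using t vs subset_in_X two_le_d by (auto simp: ocells_def up_verts_def)
  qed (use Cons_ocells in auto)
  finally show ?thesis .
qed

end

section \<open>The coboundary and the quadratic form of the upper Laplacian\<close>

definition cobd_term :: "'a set set \<Rightarrow> ('a list \<Rightarrow> real) \<Rightarrow> nat \<Rightarrow> 'a list \<Rightarrow> real" where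
  "cobd_term X f i \<tau> = (-1) ^ i * f (del_at i \<tau>) / real (deg X (set (del_at i \<tau>)))"

lemma cobd_top_eq_sum: "\<tau> \<in> ocells X d \<Longrightarrow> cobd_top X d f \<tau> = (\<Sum>i<Suc d. cobd_term X f i \<tau>)"
  by (simp add: cobd_top_def cobd_term_def)

lemma cobd_top_outside: "\<tau> \<notin> ocells X d \<Longrightarrow> cobd_top X d f \<tau> = 0"
  by (simp add: cobd_top_def)

lemma cobd_term_0: "cobd_term X f 0 \<tau> = f (tl \<tau>) / real (deg X (set (tl \<tau>)))"
  by (simp add: cobd_term_def)

lemma cobd_term_0_move_front:
  "i < length \<tau> \<Longrightarrow> cobd_term X f 0 (move_front i \<tau>) = (-1) ^ i * cobd_term X f i \<tau>"
  by (simp add: cobd_term_def move_front_def)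

lemma bd_zero [simp]: "bd X k (\<lambda>_. 0) = (\<lambda>_. 0)"
  by (simp add: bd_def fun_eq_iff)

lemma bd_scale: "bd X k (\<lambda>x. c * F x) = (\<lambda>x. c * bd X k F x)"
  by (simp add: bd_def fun_eq_iff sum_distrib_left)

lemma uplap_eq_sum:
  "\<sigma> \<in> ocells X (d - 1) \<Longrightarrow> uplap X d f \<sigma> = (\<Sum>v\<in>up_verts X \<sigma>. cobd_top X d f (v # \<sigma>))"
  by (simp add: uplap_def bd_def)

lemma uplap_outside: "\<sigma> \<notin> ocells X (d - 1) \<Longrightarrow> uplap X d f \<sigma> = 0"
  by (simp add: uplap_def bd_def)

context finite_uniform_complex
begin

lemma cobd_term_swap_adjacent:
  assumes f: "f \<in> forms X (d - 1)" and t: "\<tau> \<in> ocells X d"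
    and i: "Suc i < length \<tau>" and j: "j < Suc d"
  shows "cobd_term X f j (swap_at \<tau> i (Suc i)) = - cobd_term X f (Transposition.transpose i (Suc i) j) \<tau>"
proof -
  let ?t = "swap_at \<tau> i (Suc i)"
  have lt: "length \<tau> = Suc d" using length_ocells[OF t] .
  have dj: "del_at j \<tau> \<in> ocells X (d - 1)" using del_at_ocells t j by simp
  have ldj: "length (del_at j \<tau>) = d" using j lt by simp
  consider "j < i" | "j = i" | "j = Suc i" | "Suc i < j" by linarith
  then show ?thesis
  proof cases
    case 1
    have e: "del_at j ?t = swap_at (del_at j \<tau>) (i - 1) i" using del_at_swap_at_less[OF 1 i] .
    have "f (del_at j ?t) = - f (del_at j \<tau>)"
      unfolding e using 1 i lt ldj by (intro form_swap_at[OF f dj]) auto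
    moreover have "set (del_at j ?t) = set (del_at j \<tau>)" unfolding e using 1 i lt ldj by simp
    ultimately show ?thesis using 1 by (simp add: cobd_term_def transpose_def)
  next
    case 4
    have e: "del_at j ?t = swap_at (del_at j \<tau>) i (Suc i)"
      using del_at_swap_at_greater[OF 4, of \<tau>] j lt by simp
    have "f (del_at j ?t) = - f (del_at j \<tau>)"
      unfolding e using 4 i lt ldj j by (intro form_swap_at[OF f dj]) auto
    moreover have "set (del_at j ?t) = set (del_at j \<tau>)" unfolding e using 4 j lt ldj by simp
    ultimately show ?thesis using 4 by (simp add: cobd_term_def transpose_def)
  next
    case 2 then show ?thesis using del_at_swap_at_left[OF i] by (simp add: cobd_term_def transpose_def)
  next
    case 3 then show ?thesis using del_at_swap_at_right[OF i] by (simp add: cobd_term_def transpose_def)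
  qed
qed

lemma cobd_top_swap_adjacent:
  assumes f: "f \<in> forms X (d - 1)" and t: "\<tau> \<in> ocells X d" and i: "Suc i < length \<tau>"
  shows "cobd_top X d f (swap_at \<tau> i (Suc i)) = - cobd_top X d f \<tau>"
proof -
  let ?p = "Transposition.transpose i (Suc i)"
  have "?p permutes {..<Suc d}" using i length_ocells[OF t] by (intro permutes_swap_id) auto
  then have "(\<Sum>j<Suc d. cobd_term X f (?p j) \<tau>) = (\<Sum>j<Suc d. cobd_term X f j \<tau>)"
    using sum.permute[of ?p "{..<Suc d}" "\<lambda>j. cobd_term X f j \<tau>"] by (simp add: comp_def)
  moreover have "swap_at \<tau> i (Suc i) \<in> ocells X d" using t i by (simp add: ocells_swap_at)
  ultimately show ?thesis
    using cobd_top_eq_sum[OF t] cobd_term_swap_adjacent[OF f t i]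
    by (simp add: cobd_top_eq_sum sum_negf)
qed

lemma cobd_top_forms: "f \<in> forms X (d - 1) \<Longrightarrow> cobd_top X d f \<in> forms X d"
  by (rule formsI_adjacent) (auto intro: cobd_top_swap_adjacent simp: cobd_top_outside)

lemma cobd_top_move_front: "f \<in> forms X (d - 1) \<Longrightarrow> \<tau> \<in> ocells X d \<Longrightarrow> i < Suc d \<Longrightarrow>
    cobd_top X d f (move_front i \<tau>) = (-1) ^ i * cobd_top X d f \<tau>"
  using form_move_front[OF cobd_top_forms] by (simp add: ocells_def)

lemma bd_forms:
  assumes F: "F \<in> forms X d"
  shows "bd X d F \<in> forms X (d - 1)"
  unfolding forms_def
proof safe
  fix xs assume "xs \<notin> ocells X (d - 1)" then show "bd X d F xs = 0" by (simp add: bd_def)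
next
  fix xs i k assume xs: "xs \<in> ocells X (d - 1)" and ik: "i < length xs" "k < length xs" "i \<noteq> k"
  have "bd X d F (swap_at xs i k) = (\<Sum>v\<in>up_verts X xs. F (swap_at (v # xs) (Suc i) (Suc k)))"
    using ocells_swap_at[OF xs ik(1,2)] ik by (simp add: bd_def swap_at_Cons up_verts_def)
  also have "\<dots> = (\<Sum>v\<in>up_verts X xs. - F (v # xs))"
    using ik by (intro sum.cong refl form_swap_at[OF F] Cons_ocells[OF xs]) auto
  finally show "bd X d F (swap_at xs i k) = - bd X d F xs" using xs by (simp add: bd_def sum_negf)
qed

text \<open>The inner product on \<open>\<Omega>\<^sup>d\<^sup>-\<^sup>1\<close>, times \<open>d!\<close> since it sums over oriented cells.\<close>

definition low_inner :: "('a list \<Rightarrow> real) \<Rightarrow> ('a list \<Rightarrow> real) \<Rightarrow> real" where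
  "low_inner f g = (\<Sum>\<sigma>\<in>ocells X (d - 1). f \<sigma> * g \<sigma> / real (deg X (set \<sigma>)))"

lemma sum_cobd_top_mult_cobd_term:
  assumes f: "f \<in> forms X (d - 1)" and i: "i < Suc d"
  shows "(\<Sum>\<tau>\<in>ocells X d. cobd_top X d f \<tau> * cobd_term X f i \<tau>)
    = (\<Sum>\<tau>\<in>ocells X d. cobd_top X d f \<tau> * cobd_term X f 0 \<tau>)"
proof -
  let ?c = "cobd_top X d f"
  have "(\<Sum>\<tau>\<in>ocells X d. ?c \<tau> * cobd_term X f 0 \<tau>)
      = (\<Sum>\<tau>\<in>ocells X d. ?c (move_front i \<tau>) * cobd_term X f 0 (move_front i \<tau>))"
    using sum_move_front[OF i, of "\<lambda>\<tau>. ?c \<tau> * cobd_term X f 0 \<tau>"] by simp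
  also have "\<dots> = (\<Sum>\<tau>\<in>ocells X d. ?c \<tau> * cobd_term X f i \<tau>)"
  proof (intro sum.cong refl)
    fix \<tau> assume t: "\<tau> \<in> ocells X d"
    then have "i < length \<tau>" using i by (simp add: ocells_def)
    then have "?c (move_front i \<tau>) * cobd_term X f 0 (move_front i \<tau>)
        = ((-1) ^ i * ?c \<tau>) * ((-1) ^ i * cobd_term X f i \<tau>)"
      using cobd_top_move_front[OF f t i] cobd_term_0_move_front[of i \<tau>] by simp
    also have "\<dots> = ?c \<tau> * cobd_term X f i \<tau>"
      by (simp add: power_mult_distrib[symmetric])
    finally show "?c (move_front i \<tau>) * cobd_term X f 0 (move_front i \<tau>) = ?c \<tau> * cobd_term X f i \<tau>" .
  qed
  finally show ?thesis by simp
qed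

lemma low_inner_uplap:
  assumes f: "f \<in> forms X (d - 1)"
  shows "low_inner (uplap X d f) f = (\<Sum>\<tau>\<in>ocells X d. (cobd_top X d f \<tau>)\<^sup>2) / real (Suc d)"
proof -
  let ?c = "cobd_top X d f"
  have "low_inner (uplap X d f) f
      = (\<Sum>\<sigma>\<in>ocells X (d - 1). \<Sum>v\<in>up_verts X \<sigma>. ?c (v # \<sigma>) * cobd_term X f 0 (v # \<sigma>))"
    unfolding low_inner_def
    by (intro sum.cong refl) (simp add: uplap_eq_sum sum_distrib_right cobd_term_0 sum_divide_distrib)
  also have "\<dots> = (\<Sum>\<tau>\<in>ocells X d. ?c \<tau> * cobd_term X f 0 \<tau>)" by (rule sum_Cons_up_verts)
  finally have L: "low_inner (uplap X d f) f = (\<Sum>\<tau>\<in>ocells X d. ?c \<tau> * cobd_term X f 0 \<tau>)" .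
  have "(\<Sum>\<tau>\<in>ocells X d. (?c \<tau>)\<^sup>2) = (\<Sum>\<tau>\<in>ocells X d. \<Sum>i<Suc d. ?c \<tau> * cobd_term X f i \<tau>)"
    by (intro sum.cong refl) (simp only: power2_eq_square cobd_top_eq_sum sum_distrib_left)
  also have "\<dots> = (\<Sum>i<Suc d. \<Sum>\<tau>\<in>ocells X d. ?c \<tau> * cobd_term X f i \<tau>)" by (rule sum.swap)
  also have "\<dots> = (\<Sum>i<Suc d. \<Sum>\<tau>\<in>ocells X d. ?c \<tau> * cobd_term X f 0 \<tau>)"
    by (rule sum.cong[OF refl], rule sum_cobd_top_mult_cobd_term[OF f]) simp
  also have "\<dots> = real (Suc d) * (\<Sum>\<tau>\<in>ocells X d. ?c \<tau> * cobd_term X f 0 \<tau>)" by simp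
  finally show ?thesis using L by simp
qed

lemma low_inner_self_eq_sum_sq_cobd_term:
  assumes i: "i < Suc d"
  shows "low_inner f f = (\<Sum>\<tau>\<in>ocells X d. (cobd_term X f i \<tau>)\<^sup>2)"
proof -
  have "low_inner f f = (\<Sum>\<sigma>\<in>ocells X (d - 1). \<Sum>v\<in>up_verts X \<sigma>. (cobd_term X f 0 (v # \<sigma>))\<^sup>2)"
    unfolding low_inner_def
  proof (intro sum.cong refl)
    fix \<sigma> assume s: "\<sigma> \<in> ocells X (d - 1)"
    show "f \<sigma> * f \<sigma> / real (deg X (set \<sigma>)) = (\<Sum>v\<in>up_verts X \<sigma>. (cobd_term X f 0 (v # \<sigma>))\<^sup>2)"
      using deg_pos[OF s] deg_eq_card_up_verts[OF s] by (simp add: cobd_term_0 power2_eq_square)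
  qed
  also have "\<dots> = (\<Sum>\<tau>\<in>ocells X d. (cobd_term X f 0 \<tau>)\<^sup>2)" by (rule sum_Cons_up_verts)
  also have "\<dots> = (\<Sum>\<tau>\<in>ocells X d. (cobd_term X f 0 (move_front i \<tau>))\<^sup>2)"
    using sum_move_front[OF i, of "\<lambda>\<tau>. (cobd_term X f 0 \<tau>)\<^sup>2"] by simp
  also have "\<dots> = (\<Sum>\<tau>\<in>ocells X d. (cobd_term X f i \<tau>)\<^sup>2)"
    using i by (intro sum.cong refl)
      (auto simp: cobd_term_0_move_front ocells_def power_mult_distrib power_even_eq[symmetric])
  finally show ?thesis .
qed

lemma cobd_top_sq_le:
  assumes "\<tau> \<in> ocells X d"
  shows "(cobd_top X d f \<tau>)\<^sup>2 \<le> real (Suc d) * (\<Sum>i<Suc d. (cobd_term X f i \<tau>)\<^sup>2)"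
  using sq_sum_le_card_mult_sum_sq[of "\<lambda>i. cobd_term X f i \<tau>" "{..<Suc d}"]
  by (simp only: cobd_top_eq_sum[OF assms] card_lessThan)

lemma sum_sq_cobd_term_eq:
  "(\<Sum>\<tau>\<in>ocells X d. real (Suc d) * (\<Sum>i<Suc d. (cobd_term X f i \<tau>)\<^sup>2)) = (real d + 1)\<^sup>2 * low_inner f f"
proof -
  have "(\<Sum>\<tau>\<in>ocells X d. real (Suc d) * (\<Sum>i<Suc d. (cobd_term X f i \<tau>)\<^sup>2))
      = real (Suc d) * (\<Sum>i<Suc d. \<Sum>\<tau>\<in>ocells X d. (cobd_term X f i \<tau>)\<^sup>2)"
    by (simp add: sum_distrib_left sum.swap[of _ "ocells X d"])
  also have "\<dots> = real (Suc d) * (\<Sum>i<Suc d. low_inner f f)"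
    using low_inner_self_eq_sum_sq_cobd_term[symmetric] by (intro arg_cong[where f = "(*) _"] sum.cong) auto
  also have "\<dots> = (real d + 1)\<^sup>2 * low_inner f f" by (simp add: power2_eq_square algebra_simps)
  finally show ?thesis .
qed

lemma cobd_term_eq_if_sum_sq_cobd_top_eq:
  assumes eq: "(\<Sum>\<tau>\<in>ocells X d. (cobd_top X d f \<tau>)\<^sup>2) = (real d + 1)\<^sup>2 * low_inner f f"
    and t: "\<tau> \<in> ocells X d" and i: "i < Suc d"
  shows "cobd_term X f i \<tau> = cobd_term X f 0 \<tau>"
proof -
  let ?g = "\<lambda>\<tau>. real (Suc d) * (\<Sum>i<Suc d. (cobd_term X f i \<tau>)\<^sup>2) - (cobd_top X d f \<tau>)\<^sup>2"
  have "(\<Sum>\<tau>\<in>ocells X d. ?g \<tau>) = 0"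
    using eq sum_sq_cobd_term_eq[of f] by (simp add: sum_subtractf)
  moreover have "\<forall>\<tau>\<in>ocells X d. 0 \<le> ?g \<tau>" using cobd_top_sq_le by simp
  ultimately have "\<forall>\<tau>\<in>ocells X d. ?g \<tau> = 0"
    using sum_nonneg_eq_0_iff[of "ocells X d" ?g] finite_ocells by simp
  then have "(cobd_top X d f \<tau>)\<^sup>2 = real (Suc d) * (\<Sum>i<Suc d. (cobd_term X f i \<tau>)\<^sup>2)"
    using t by simp
  then have "(\<Sum>i<Suc d. cobd_term X f i \<tau>)\<^sup>2
      = real (card {..<Suc d}) * (\<Sum>i<Suc d. (cobd_term X f i \<tau>)\<^sup>2)"
    by (simp only: cobd_top_eq_sum[OF t] card_lessThan)
  from eq_if_sq_sum_eq_card_mult_sum_sq[OF finite_lessThan this, of i 0] i show ?thesis by simp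
qed

lemma low_inner_self_pos: "f \<in> forms X (d - 1) \<Longrightarrow> f \<noteq> (\<lambda>_. 0) \<Longrightarrow> 0 < low_inner f f"
proof -
  assume f: "f \<in> forms X (d - 1)" and "f \<noteq> (\<lambda>_. 0)"
  then obtain x where x: "f x \<noteq> 0" by auto
  have xo: "x \<in> ocells X (d - 1)" using form_zero_outside[OF f] x by blast
  show ?thesis unfolding low_inner_def
    by (rule sum_pos2[OF finite_ocells xo]) (use x deg_pos[OF xo] in \<open>auto simp: zero_less_divide_iff zero_less_mult_iff\<close>)
qed

lemma low_inner_eigen: "uplap X d f = (\<lambda>x. lam * f x) \<Longrightarrow> low_inner (uplap X d f) f = lam * low_inner f f"
  by (simp add: low_inner_def sum_distrib_left mult.assoc)

lemma eigenvalue_bounds: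
  assumes f: "f \<in> forms X (d - 1)" "f \<noteq> (\<lambda>_. 0)" and e: "uplap X d f = (\<lambda>x. lam * f x)"
  shows "0 \<le> lam \<and> lam \<le> real d + 1"
proof -
  let ?S = "\<Sum>\<tau>\<in>ocells X d. (cobd_top X d f \<tau>)\<^sup>2"
  have N: "0 < low_inner f f" using low_inner_self_pos[OF f] .
  have q: "lam * low_inner f f = ?S / real (Suc d)"
    using low_inner_eigen[OF e] low_inner_uplap[OF f(1)] by simp
  have "0 \<le> ?S" by (simp add: sum_nonneg)
  then have "0 \<le> lam * low_inner f f" using q by simp
  then have lam_nonneg: "0 \<le> lam" using N by (simp add: zero_le_mult_iff)
  have "?S \<le> (\<Sum>\<tau>\<in>ocells X d. real (Suc d) * (\<Sum>i<Suc d. (cobd_term X f i \<tau>)\<^sup>2))"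
    by (rule sum_mono) (rule cobd_top_sq_le)
  then have "?S \<le> (real d + 1)\<^sup>2 * low_inner f f" using sum_sq_cobd_term_eq[of f] by simp
  then have "lam * low_inner f f \<le> (real d + 1)\<^sup>2 * low_inner f f / real (Suc d)"
    unfolding q by (rule divide_right_mono) simp
  also have "\<dots> = (real d + 1) * low_inner f f"
    unfolding of_nat_Suc add.commute[of 1] power2_eq_square mult.assoc
    by (rule nonzero_mult_div_cancel_left) simp
  finally have "lam * low_inner f f \<le> (real d + 1) * low_inner f f" .
  then show ?thesis using N lam_nonneg by simp
qed

lemma uplap_kernel_eq_closed:
  "{f\<in>forms X (d - 1). uplap X d f = (\<lambda>_. 0)} = {f\<in>forms X (d - 1). cobd_top X d f = (\<lambda>_. 0)}"
proof safe
  fix f assume f: "f \<in> forms X (d - 1)" and u: "uplap X d f = (\<lambda>_. 0)"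
  have "(\<Sum>\<tau>\<in>ocells X d. (cobd_top X d f \<tau>)\<^sup>2) = 0"
    using low_inner_eigen[of f 0] low_inner_uplap[OF f] u by simp
  then have "\<forall>\<tau>\<in>ocells X d. (cobd_top X d f \<tau>)\<^sup>2 = 0"
    using sum_nonneg_eq_0_iff[OF finite_ocells, where f = "\<lambda>\<tau>. (cobd_top X d f \<tau>)\<^sup>2"] by simp
  then show "cobd_top X d f = (\<lambda>_. 0)" using cobd_top_outside by fastforce
qed (simp add: uplap_def)

end

section \<open>The eigenvalue \<open>d + 1\<close> and disorientations\<close>

context finite_uniform_complex
begin

lemma cobd_term_induced:
  assumes f: "f \<in> forms X (d - 1)" and t: "\<tau> \<in> ocells X d" and i: "i < Suc d"
    and s: "\<sigma> \<in> ocells X (d - 1)" and st: "set (del_at i \<tau>) = set \<sigma>"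
    and o: "orient_eq (del_at i \<tau>) (if even i then \<sigma> else opp \<sigma>)"
  shows "cobd_term X f i \<tau> = f \<sigma> / real (deg X (set \<sigma>))"
proof -
  have "f (del_at i \<tau>) = f (if even i then \<sigma> else opp \<sigma>)"
    using form_orient_eq[OF f del_at_ocells[OF t i] o] by simp
  also have "\<dots> = (-1) ^ i * f \<sigma>" using form_opp_if[OF f s one_less_length_low_ocells[OF s]] .
  finally show ?thesis by (simp add: cobd_term_def st)
qed

lemma induces_face_index:
  assumes ind: "induces \<tau> \<rho>" and t: "\<tau> \<in> ocells X d" and k: "k < Suc d" and notin: "\<tau> ! k \<notin> set \<rho>"
  shows "orient_eq (del_at k \<tau>) (if even k then \<rho> else opp \<rho>)"
proof -
  have lt: "length \<tau> = Suc d" using length_ocells[OF t] .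
  then obtain i where i: "i < length \<tau>" "set (del_at i \<tau>) = set \<rho>"
      "orient_eq (del_at i \<tau>) (if even i then \<rho> else opp \<rho>)"
    using induces_face[OF ind] two_le_d by auto
  have "i = k"
  proof (rule ccontr)
    assume "i \<noteq> k"
    then have "\<tau> ! k \<in> set (del_at i \<tau>)"
      using set_del_at[of \<tau> i] t i(1) k lt nth_eq_iff_index_eq[of \<tau> k i] by (auto simp: ocells_def)
    then show False using i(2) notin by simp
  qed
  then show ?thesis using i(3) by simp
qed

lemma ex_vertex_notin:
  assumes "t \<in> ocells X d" "t' \<in> ocells X d" "set t \<noteq> set t'"
  obtains i where "i < Suc d" "t ! i \<notin> set t'"
proof -
  have "\<not> set t \<subseteq> set t'"
    using assms card_set_ocells card_subset_eq by (metis List.finite_set)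
  then obtain x where x: "x \<in> set t" "x \<notin> set t'" by blast
  then obtain i where "i < length t" "t ! i = x" by (auto simp: in_set_conv_nth)
  then show thesis using that length_ocells[OF assms(1)] x by auto
qed

lemma set_del_at_eq_Int:
  assumes t: "t \<in> ocells X d" and i: "i < Suc d" "t ! i \<notin> set t'"
    and c: "card (set t \<inter> set t') = d"
  shows "set (del_at i t) = set t \<inter> set t'"
proof -
  have s: "set (del_at i t) = set t - {t ! i}"
    using set_del_at[of t i] t i length_ocells[OF t] by (simp add: ocells_def)
  have "set t \<inter> set t' \<subseteq> set t - {t ! i}" using i by auto
  moreover have "card (set t - {t ! i}) = d"
    using card_set_ocells[OF t] i length_ocells[OF t] by simp
  ultimately have "set t \<inter> set t' = set t - {t ! i}"
    using c card_subset_eq by (metis finite_Diff List.finite_set)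
  then show ?thesis using s by simp
qed

subsection \<open>An eigenform of \<open>d + 1\<close> yields a disorientation\<close>

context
  fixes f :: "'a list \<Rightarrow> real"
  assumes f: "f \<in> forms X (d - 1)"
    and eigen: "uplap X d f = (\<lambda>x. (real d + 1) * f x)"
begin

lemma cobd_term_eq_cobd_term_0:
  assumes "\<tau> \<in> ocells X d" "i < Suc d"
  shows "cobd_term X f i \<tau> = cobd_term X f 0 \<tau>"
proof (rule cobd_term_eq_if_sum_sq_cobd_top_eq[OF _ assms])
  have "(real d + 1) * low_inner f f = (\<Sum>\<tau>\<in>ocells X d. (cobd_top X d f \<tau>)\<^sup>2) / real (Suc d)"
    using low_inner_eigen[OF eigen] low_inner_uplap[OF f] by simp
  then show "(\<Sum>\<tau>\<in>ocells X d. (cobd_top X d f \<tau>)\<^sup>2) = (real d + 1)\<^sup>2 * low_inner f f"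
    by (simp add: field_simps power2_eq_square)
qed

lemma cobd_top_eq_cobd_term_0:
  assumes t: "\<tau> \<in> ocells X d"
  shows "cobd_top X d f \<tau> = real (Suc d) * cobd_term X f 0 \<tau>"
proof -
  have "cobd_top X d f \<tau> = (\<Sum>i<Suc d. cobd_term X f 0 \<tau>)"
    unfolding cobd_top_eq_sum[OF t] by (rule sum.cong[OF refl], rule cobd_term_eq_cobd_term_0[OF t]) simp
  then show ?thesis by simp
qed

text \<open>Along a neighbour step \<open>\<sigma> \<sim> \<sigma>'\<close> in a \<open>d\<close>-cell \<open>\<tau>\<close>, the two faces contribute equal summands
  to \<open>\<delta>f(\<tau>)\<close>, so \<open>f(\<sigma>)/deg \<sigma> = -f(\<sigma>')/deg \<sigma>'\<close>.\<close>

lemma nbr_weighted_abs_eq: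
  assumes s: "\<sigma> \<in> ocells X (d - 1)" and n: "nbr X d \<sigma> \<sigma>'"
  shows "\<sigma>' \<in> ocells X (d - 1) \<and> \<bar>f \<sigma>'\<bar> / real (deg X (set \<sigma>')) = \<bar>f \<sigma>\<bar> / real (deg X (set \<sigma>))"
proof -
  obtain \<tau> where t: "\<tau> \<in> ocells X d" "induces \<tau> \<sigma>" "induces \<tau> (opp \<sigma>')"
    using n by (auto simp: nbr_def)
  have lt: "Suc (Suc 0) < length \<tau>" using length_ocells[OF t(1)] two_le_d by simp
  obtain i where i: "i < length \<tau>" "set (del_at i \<tau>) = set \<sigma>"
      "orient_eq (del_at i \<tau>) (if even i then \<sigma> else opp \<sigma>)"
    using induces_face[OF t(2) lt] by blast
  obtain j where j: "j < length \<tau>" "set (del_at j \<tau>) = set (opp \<sigma>')"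
      "orient_eq (del_at j \<tau>) (if even j then opp \<sigma>' else opp (opp \<sigma>'))"
    using induces_face[OF t(3) lt] by blast
  have ij: "i < Suc d" "j < Suc d" using i j length_ocells[OF t(1)] by auto
  have oj: "(if even j then opp \<sigma>' else opp (opp \<sigma>')) \<in> ocells X (d - 1)"
    using ocells_orient_eq[OF del_at_ocells[OF t(1) ij(2)] j(3)] .
  have "Suc 0 < length (if even j then opp \<sigma>' else opp (opp \<sigma>'))"
    using one_less_length_low_ocells[OF oj] .
  then have l': "Suc 0 < length \<sigma>'" by (simp split: if_splits)
  have os': "opp \<sigma>' \<in> ocells X (d - 1)"
    using oj ocells_opp_iff[of "opp \<sigma>'"] l' by (auto split: if_splits)
  then have s': "\<sigma>' \<in> ocells X (d - 1)" using ocells_opp_iff[OF l'] by simp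
  have "f \<sigma> / real (deg X (set \<sigma>)) = cobd_term X f i \<tau>"
    using cobd_term_induced[OF f t(1) ij(1) s i(2,3)] by simp
  also have "\<dots> = cobd_term X f j \<tau>"
    using cobd_term_eq_cobd_term_0[OF t(1) ij(1)] cobd_term_eq_cobd_term_0[OF t(1) ij(2)] by simp
  also have "\<dots> = f (opp \<sigma>') / real (deg X (set (opp \<sigma>')))"
    using cobd_term_induced[OF f t(1) ij(2) os' j(2,3)] .
  also have "\<dots> = - f \<sigma>' / real (deg X (set \<sigma>'))"
    using form_opp[OF f s' l'] set_opp[OF l'] by simp
  finally have "\<bar>f \<sigma>\<bar> / real (deg X (set \<sigma>)) = \<bar>f \<sigma>'\<bar> / real (deg X (set \<sigma>'))"
    by (metis abs_divide abs_minus_cancel abs_of_nat)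
  then show ?thesis using s' by simp
qed

context
  assumes nonzero: "f \<noteq> (\<lambda>_. 0)" and connected: "dconnected X d"
begin

lemma top_eigenform_nonvanishing:
  assumes s: "\<sigma> \<in> ocells X (d - 1)"
  shows "f \<sigma> \<noteq> 0"
proof -
  obtain \<sigma>0 where \<sigma>0: "f \<sigma>0 \<noteq> 0" using nonzero by auto
  have s0: "\<sigma>0 \<in> ocells X (d - 1)" using form_zero_outside[OF f] \<sigma>0 by blast
  have "(nbr X d)\<^sup>*\<^sup>* \<sigma>0 \<sigma>" using connected s0 s by (auto simp: dconnected_def)
  then have "\<sigma> \<in> ocells X (d - 1) \<and>
      \<bar>f \<sigma>\<bar> / real (deg X (set \<sigma>)) = \<bar>f \<sigma>0\<bar> / real (deg X (set \<sigma>0))"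
  proof (induction rule: rtranclp_induct)
    case (step y z) then show ?case using nbr_weighted_abs_eq by metis
  qed (use s0 in simp)
  moreover have "0 < \<bar>f \<sigma>0\<bar> / real (deg X (set \<sigma>0))" using \<sigma>0 deg_pos[OF s0] by simp
  ultimately show ?thesis by auto
qed

lemma cobd_top_nonvanishing:
  assumes t: "\<tau> \<in> ocells X d"
  shows "cobd_top X d f \<tau> \<noteq> 0"
proof -
  have "tl \<tau> \<in> ocells X (d - 1)" using del_at_ocells[OF t, of 0] by simp
  then show ?thesis
    using cobd_top_eq_cobd_term_0[OF t] top_eigenform_nonvanishing deg_pos by (simp add: cobd_term_0)
qed

lemma sign_face_of_positive_cell:
  assumes t: "t \<in> ocells X d" "0 < cobd_top X d f t" and i: "i < Suc d"
  shows "0 < (-1) ^ i * f (del_at i t)"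
proof -
  have "0 < cobd_term X f i t"
    using cobd_top_eq_cobd_term_0[OF t(1)] cobd_term_eq_cobd_term_0[OF t(1) i] t(2)
    by (simp add: zero_less_mult_iff)
  moreover have "0 < real (deg X (set (del_at i t)))" using deg_pos[OF del_at_ocells[OF t(1) i]] by simp
  ultimately show ?thesis by (simp add: cobd_term_def zero_less_divide_iff)
qed

text \<open>The face \<open>\<rho>\<close> of \<open>t\<close> opposite to vertex \<open>i\<close>, oriented as induced by \<open>t\<close>, has \<open>f \<rho> > 0\<close>; the
  same holds for \<open>t'\<close>, which therefore induces the same orientation \<open>\<rho>\<close>.\<close>

lemma positive_cells_induce_common_face:
  assumes t: "t \<in> ocells X d" "0 < cobd_top X d f t" and t': "t' \<in> ocells X d" "0 < cobd_top X d f t'"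
    and ne: "set t \<noteq> set t'" and c: "card (set t \<inter> set t') = d"
  shows "\<exists>\<rho>. induces t \<rho> \<and> induces t' \<rho>"
proof -
  obtain i where i: "i < Suc d" "t ! i \<notin> set t'" using ex_vertex_notin[OF t(1) t'(1) ne] .
  obtain j where j: "j < Suc d" "t' ! j \<notin> set t" using ex_vertex_notin[OF t'(1) t(1)] ne by metis
  define D where "D = del_at i t"
  define D' where "D' = del_at j t'"
  have D: "D \<in> ocells X (d - 1)" "D' \<in> ocells X (d - 1)"
    unfolding D_def D'_def using del_at_ocells t(1) t'(1) i j by auto
  have lD: "Suc 0 < length D" using one_less_length_low_ocells[OF D(1)] .
  define \<rho> where "\<rho> = (if even i then D else opp D)"
  have \<rho>: "\<rho> \<in> ocells X (d - 1)" using D(1) ocells_opp[OF D(1) lD] by (simp add: \<rho>_def)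
  have l\<rho>: "Suc 0 < length \<rho>" using one_less_length_low_ocells[OF \<rho>] .
  have f\<rho>: "0 < f \<rho>"
    using sign_face_of_positive_cell[OF t i(1)] form_opp_if[OF f D(1) lD, of i] by (simp add: \<rho>_def D_def)
  have ind1: "induces t \<rho>" unfolding induces_def
    using i length_ocells[OF t(1)] opp_opp[OF lD] orient_eq_refl
    by (intro exI[of _ i]) (auto simp: \<rho>_def D_def)
  define T where "T = (if even j then \<rho> else opp \<rho>)"
  have T: "T \<in> ocells X (d - 1)" using \<rho> ocells_opp[OF \<rho> l\<rho>] by (simp add: T_def)
  have "0 < (-1) ^ j * f D'" using sign_face_of_positive_cell[OF t' j(1)] by (simp add: D'_def)
  moreover have "f D' * f T = ((-1) ^ j * f D') * f \<rho>"
    using form_opp_if[OF f \<rho> l\<rho>, of j] unfolding T_def by (simp only: mult_ac)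
  ultimately have "0 < f D' * f T" using f\<rho> by (metis mult_pos_pos)
  moreover have "set D' = set T"
    using set_del_at_eq_Int[OF t(1) i c] set_del_at_eq_Int[OF t'(1) j] c set_opp[OF l\<rho>] set_opp[OF lD]
    by (simp add: D_def D'_def T_def \<rho>_def Int_commute)
  ultimately have "orient_eq D' T" using orient_eq_if_same_sign[OF f D(2) T] by simp
  then have ind2: "induces t' \<rho>" unfolding induces_def using j length_ocells[OF t'(1)]
    by (intro exI[of _ j]) (simp add: D'_def T_def)
  show ?thesis using ind1 ind2 by blast
qed

lemma disorientation_positive_cells: "disorientation X d {t \<in> ocells X d. 0 < cobd_top X d f t}"
  unfolding disorientation_def
proof (intro conjI ballI allI impI)
  fix t t' assume t: "t \<in> ocells X d" and "orient_eq t t'"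
  then show "t \<in> {t \<in> ocells X d. 0 < cobd_top X d f t} \<longleftrightarrow> t' \<in> {t \<in> ocells X d. 0 < cobd_top X d f t}"
    using form_orient_eq[OF cobd_top_forms[OF f]] ocells_orient_eq by auto
next
  fix t assume t: "t \<in> ocells X d"
  have l: "Suc 0 < length t" using length_ocells[OF t] two_le_d by simp
  show "t \<in> {t \<in> ocells X d. 0 < cobd_top X d f t} \<longleftrightarrow> opp t \<notin> {t \<in> ocells X d. 0 < cobd_top X d f t}"
    using form_opp[OF cobd_top_forms[OF f] t l] ocells_opp[OF t l] cobd_top_nonvanishing[OF t] t by auto
qed (use positive_cells_induce_common_face in auto)

end

end

subsection \<open>A disorientation yields an eigenform of \<open>d + 1\<close>\<close>

context
  fixes S :: "'a list set"
  assumes S: "disorientation X d S"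
begin

lemma disF_forms: "disF X d S \<in> forms X d"
  unfolding forms_def
proof safe
  fix xs assume "xs \<notin> ocells X d" then show "disF X d S xs = 0"
    using S by (auto simp: disF_def disorientation_def)
next
  fix xs i k assume xs: "xs \<in> ocells X d" and ik: "i < length xs" "k < length xs" "i \<noteq> k"
  let ?t = "Transposition.transpose (0::nat) 1"
  let ?u = "Transposition.transpose i k"
  have l1: "Suc 0 < length xs" using length_ocells[OF xs] two_le_d by simp
  have pt: "?t \<circ> ?u permutes {..<length xs}"
    using permutes_transpose_01[OF l1] permutes_swap_id[of i "{..<length xs}" k] ik
    by (intro permutes_compose) auto
  have ev: "evenperm (?t \<circ> ?u)"
    using evenperm_comp[OF permutation_swap_id permutation_swap_id, of 0 1 i k] ik by (simp add: evenperm_swap)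
  have "permute_list (?t \<circ> ?u) (opp xs) = permute_list ?u (permute_list (?t \<circ> ?t) xs)"
    using opp_eq_permute_list[OF l1] permute_list_compose[of "?t \<circ> ?u" xs ?t] pt permutes_transpose_01[OF l1]
      permute_list_compose[of "?u" "permute_list ?t xs" "?t"] permutes_swap_id[of i "{..<length xs}" k] ik
    by (simp add: o_assoc)
  also have "\<dots> = swap_at xs i k" using ik by (simp add: permute_list_transpose)
  finally have "orient_eq (opp xs) (swap_at xs i k)"
    using orient_eq_permute_listI[OF _ ev, of "opp xs"] pt by simp
  then have "swap_at xs i k \<in> S \<longleftrightarrow> opp xs \<in> S"
    using S ocells_opp[OF xs l1] by (auto simp: disorientation_def)
  also have "\<dots> \<longleftrightarrow> xs \<notin> S" using S xs by (auto simp: disorientation_def)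
  finally show "disF X d S (swap_at xs i k) = - disF X d S xs"
    using ocells_swap_at[OF xs ik(1,2)] xs by (auto simp: disF_def)
qed

text \<open>If \<open>v\<sigma> \<in> X\<^sup>d\<^sub>+\<close> but \<open>w\<sigma> \<notin> X\<^sup>d\<^sub>+\<close>, then \<open>v\<sigma>\<close> and the reorientation \<open>\<sigma>\<^sub>0 w \<sigma>\<^sub>1\<dots>\<close> of \<open>w\<sigma>\<close>
  both lie in \<open>X\<^sup>d\<^sub>+\<close>, yet induce opposite orientations on their common face \<open>\<sigma>\<close>.\<close>

lemma disF_Cons_not_differ:
  assumes s: "\<sigma> \<in> ocells X (d - 1)" and v: "v \<in> up_verts X \<sigma>" and w: "w \<in> up_verts X \<sigma>"
    and vw: "v \<noteq> w" and vS: "v # \<sigma> \<in> S" and wS: "w # \<sigma> \<notin> S"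
  shows False
proof -
  obtain s0 r where sr: "\<sigma> = s0 # r" using length_low_ocells[OF s] two_le_d by (cases \<sigma>) auto
  let ?t = "v # \<sigma>" and ?t' = "s0 # w # r"
  have tO: "?t \<in> ocells X d" "w # \<sigma> \<in> ocells X d" using Cons_ocells s v w by auto
  have opw: "opp (w # \<sigma>) = ?t'" by (simp add: sr opp_def swap_at_def)
  have t'S: "?t' \<in> S" using S tO(2) wS opw by (auto simp: disorientation_def)
  have t'O: "?t' \<in> ocells X d" using S t'S by (auto simp: disorientation_def)
  have notin: "v \<notin> set \<sigma>" "w \<notin> set \<sigma>" using v w by (auto simp: up_verts_def)
  have "card (set \<sigma>) = d" using card_set_ocells[OF s] by simp
  moreover have "set ?t \<inter> set ?t' = set \<sigma>" using notin vw sr by (simp add: set_eq_iff) blast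
  ultimately have card_Int: "card (set ?t \<inter> set ?t') = d" by (simp only:)
  have v_notin: "v \<notin> set ?t'" using notin vw sr by simp
  have w_notin: "w \<notin> set ?t" using notin vw by simp
  from v_notin have ne: "set ?t \<noteq> set ?t'" by (metis list.set_intros(1))
  have "\<forall>t\<in>S. \<forall>t'\<in>S. set t \<noteq> set t' \<and> card (set t \<inter> set t') = d \<longrightarrow>
      (\<exists>\<rho>. induces t \<rho> \<and> induces t' \<rho>)"
    using S by (simp add: disorientation_def)
  then obtain \<rho> where r1: "induces ?t \<rho>" and r2: "induces ?t' \<rho>"
    using vS t'S ne card_Int by blast
  have lt: "Suc (Suc 0) < length ?t" "Suc (Suc 0) < length ?t'"
    using length_low_ocells[OF s] two_le_d sr by auto
  have "v \<notin> set \<rho>" using set_induced_subset[OF r2 lt(2)] v_notin by blast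
  then have o1: "orient_eq \<sigma> \<rho>" using induces_face_index[OF r1 tO(1), of 0] by simp
  have "w \<notin> set \<rho>" using set_induced_subset[OF r1 lt(1)] w_notin by blast
  then have o2: "orient_eq \<sigma> (opp \<rho>)" using induces_face_index[OF r2 t'O, of 1] two_le_d sr
    by (simp add: del_at_def)
  have "distinct \<sigma>" using s by (simp add: ocells_def)
  from not_orient_eq_opp[OF this one_less_length_low_ocells[OF s] o1] o2 show False ..
qed

lemma disF_Cons_eq:
  assumes s: "\<sigma> \<in> ocells X (d - 1)" and v: "v \<in> up_verts X \<sigma>" and w: "w \<in> up_verts X \<sigma>"
  shows "disF X d S (v # \<sigma>) = disF X d S (w # \<sigma>)"
  using disF_Cons_not_differ[OF s v w] disF_Cons_not_differ[OF s w v] Cons_ocells[OF s v] Cons_ocells[OF s w]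
  by (cases "v = w") (auto simp: disF_def)

lemma bd_disF:
  assumes s: "\<sigma> \<in> ocells X (d - 1)" and w: "w \<in> up_verts X \<sigma>"
  shows "bd X d (disF X d S) \<sigma> = real (deg X (set \<sigma>)) * disF X d S (w # \<sigma>)"
  using s disF_Cons_eq[OF s _ w] by (simp add: bd_def deg_eq_card_up_verts[OF s])

lemma cobd_top_bd_disF: "cobd_top X d (bd X d (disF X d S)) = (\<lambda>x. (real d + 1) * disF X d S x)"
proof
  fix \<tau>
  show "cobd_top X d (bd X d (disF X d S)) \<tau> = (real d + 1) * disF X d S \<tau>"
  proof (cases "\<tau> \<in> ocells X d")
    case False
    then show ?thesis using disF_forms by (simp add: cobd_top_outside form_zero_outside)
  next
    case t: True
    have "cobd_term X (bd X d (disF X d S)) i \<tau> = disF X d S \<tau>" if i: "i < Suc d" for i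
    proof -
      have di: "del_at i \<tau> \<in> ocells X (d - 1)" using del_at_ocells[OF t i] .
      have "cobd_term X (bd X d (disF X d S)) i \<tau> = (-1) ^ i * disF X d S (move_front i \<tau>)"
        using bd_disF[OF di nth_up_verts_del_at[OF t i]] deg_pos[OF di]
        by (simp add: cobd_term_def move_front_def)
      also have "\<dots> = disF X d S \<tau>"
        using form_move_front[OF disF_forms t] i length_ocells[OF t]
        by (simp add: power_mult_distrib[symmetric])
      finally show ?thesis .
    qed
    then have "cobd_top X d (bd X d (disF X d S)) \<tau> = (\<Sum>i<Suc d. disF X d S \<tau>)"
      unfolding cobd_top_eq_sum[OF t] by (intro sum.cong) auto
    then show ?thesis by simp
  qed
qed

lemma disF_eigenform:
  "uplap X d (bd X d (disF X d S)) = (\<lambda>x. (real d + 1) * bd X d (disF X d S) x)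
    \<and> bd X d (disF X d S) \<noteq> (\<lambda>_. 0)"
proof
  show "uplap X d (bd X d (disF X d S)) = (\<lambda>x. (real d + 1) * bd X d (disF X d S) x)"
    unfolding uplap_def cobd_top_bd_disF bd_scale ..
  obtain \<tau> where t: "\<tau> \<in> ocells X d" using ex_ocells_top by blast
  then obtain v r where vr: "\<tau> = v # r" by (cases \<tau>) (auto simp: ocells_def)
  have r: "r \<in> ocells X (d - 1)" using del_at_ocells[OF t, of 0] vr by simp
  have v: "v \<in> up_verts X r" using t vr by (auto simp: ocells_def up_verts_def)
  have "bd X d (disF X d S) r \<noteq> 0"
    using bd_disF[OF r v] deg_pos[OF r] t vr by (simp add: disF_def)
  then show "bd X d (disF X d S) \<noteq> (\<lambda>_. 0)" by auto
qed

end

end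

section \<open>Decomposition into \<open>(d-1)\<close>-components\<close>

definition lists_in :: "'a set set \<Rightarrow> 'a list set" where
  "lists_in C = {xs. set xs \<in> C}"

lemma zero_outside_lists_in_forms: "f \<in> forms X k \<Longrightarrow> zero_outside (lists_in C) f \<in> forms X k"
  by (auto simp: forms_def zero_outside_def lists_in_def ocells_def)

context finite_uniform_complex
begin

lemma sym_adj: "sym (adj X d)"
  by (auto simp: sym_def adj_def Un_commute)

lemma component_eq_Image:
  "C \<in> components X d \<Longrightarrow> \<exists>c\<in>cells X (d - 1). C = (adj X d)\<^sup>* `` {c}"
  by (auto simp: components_def quotient_def)

lemma component_closed:
  "C \<in> components X d \<Longrightarrow> s \<in> C \<Longrightarrow> (s, s') \<in> (adj X d)\<^sup>* \<Longrightarrow> s' \<in> C"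
  using component_eq_Image by (metis Image_singleton_iff rtrancl_trans)

lemma component_subset_cells: "C \<in> components X d \<Longrightarrow> C \<subseteq> cells X (d - 1)"
proof
  fix s assume C: "C \<in> components X d" and s: "s \<in> C"
  obtain c where c: "c \<in> cells X (d - 1)" "C = (adj X d)\<^sup>* `` {c}" using component_eq_Image[OF C] by blast
  have "(c, s) \<in> (adj X d)\<^sup>*" using s c by auto
  then show "s \<in> cells X (d - 1)"
    using c(1) by (induction rule: rtrancl_induct) (auto simp: adj_def)
qed

lemma components_disjoint:
  assumes C: "C \<in> components X d" and C': "C' \<in> components X d" and s: "s \<in> C" "s \<in> C'"
  shows "C = C'"
proof -
  have sym: "(a, b) \<in> (adj X d)\<^sup>* \<Longrightarrow> (b, a) \<in> (adj X d)\<^sup>*" for a b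
    using sym_rtrancl[OF sym_adj] by (auto simp: sym_def)
  have sub: "C1 \<subseteq> C2" if C12: "C1 \<in> components X d" "C2 \<in> components X d"
    and s12: "s \<in> C1" "s \<in> C2" for C1 C2
  proof
    fix x assume x: "x \<in> C1"
    obtain c where c: "C1 = (adj X d)\<^sup>* `` {c}" using component_eq_Image[OF C12(1)] by blast
    have "(c, s) \<in> (adj X d)\<^sup>*" "(c, x) \<in> (adj X d)\<^sup>*" using c s12(1) x by auto
    then have "(s, x) \<in> (adj X d)\<^sup>*" using sym rtrancl_trans by metis
    then show "x \<in> C2" using component_closed[OF C12(2) s12(2)] by blast
  qed
  show ?thesis using sub[OF C C' s] sub[OF C' C s(2,1)] by blast
qed

lemma ex_component: "s \<in> cells X (d - 1) \<Longrightarrow> \<exists>C\<in>components X d. s \<in> C"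
  by (auto simp: components_def quotient_def intro!: bexI[of _ s])

lemma finite_components: "finite (components X d)"
proof -
  have "finite (cells X (d - 1))" using finite_X by (simp add: cells_def)
  then show ?thesis
    using component_subset_cells finite_subset[of "components X d" "Pow (cells X (d - 1))"] by auto
qed

lemma adj_rtrancl_if_faces:
  assumes s: "s \<in> cells X (d - 1)" "s' \<in> cells X (d - 1)" and T: "T \<in> cells X d"
    and sub: "s \<subseteq> T" "s' \<subseteq> T"
  shows "(s, s') \<in> (adj X d)\<^sup>*"
proof (cases "s = s'")
  case False
  have cs: "card s = d" "card s' = d" "card T = Suc d" using s T by (auto simp: cells_def)
  have fT: "finite T" using T finite_cell by (auto simp: cells_def)
  have "\<not> s' \<subseteq> s" using False cs card_subset_eq[of s s'] fT sub finite_subset by metis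
  then have "s \<subset> s \<union> s'" by auto
  then have "card s < card (s \<union> s')" using fT sub by (meson finite_subset le_sup_iff psubset_card_mono)
  moreover have "card (s \<union> s') \<le> card T" using fT sub by (simp add: card_mono)
  ultimately have "card (s \<union> s') = card T" using cs by linarith
  then have "s \<union> s' = T" using fT sub card_subset_eq by (metis le_sup_iff)
  then have "(s, s') \<in> adj X d" using s T by (simp add: adj_def)
  then show ?thesis by simp
qed simp

lemma face_in_component_iff:
  assumes C: "C \<in> components X d" and t: "\<tau> \<in> ocells X d" and i: "i < Suc d"
  shows "set (del_at i \<tau>) \<in> C \<longleftrightarrow> set (tl \<tau>) \<in> C"
proof -
  have "(set (del_at i \<tau>), set (del_at j \<tau>)) \<in> (adj X d)\<^sup>*" if "i < Suc d" "j < Suc d" for i j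
    using adj_rtrancl_if_faces[OF set_ocells_in_cells[OF del_at_ocells[OF t that(1)]]
        set_ocells_in_cells[OF del_at_ocells[OF t that(2)]] set_ocells_in_cells[OF t]]
      set_del_at_subset[of i \<tau>] set_del_at_subset[of j \<tau>] by blast
  then show ?thesis using component_closed[OF C] i by (metis del_at_0 zero_less_Suc)
qed

lemma cobd_top_zero_outside:
  assumes C: "C \<in> components X d" and t: "\<tau> \<in> ocells X d"
  shows "cobd_top X d (zero_outside (lists_in C) g) \<tau> = (if set (tl \<tau>) \<in> C then cobd_top X d g \<tau> else 0)"
proof -
  have "cobd_term X (zero_outside (lists_in C) g) i \<tau> = (if set (tl \<tau>) \<in> C then cobd_term X g i \<tau> else 0)"
    if i: "i < Suc d" for i
    using face_in_component_iff[OF C t i] by (simp add: cobd_term_def zero_outside_def lists_in_def)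
  then show ?thesis unfolding cobd_top_eq_sum[OF t] by simp
qed

lemma uplap_zero_outside:
  assumes C: "C \<in> components X d"
  shows "uplap X d (zero_outside (lists_in C) g) = zero_outside (lists_in C) (uplap X d g)"
proof
  fix \<sigma>
  show "uplap X d (zero_outside (lists_in C) g) \<sigma> = zero_outside (lists_in C) (uplap X d g) \<sigma>"
  proof (cases "\<sigma> \<in> ocells X (d - 1)")
    case s: True
    have "uplap X d (zero_outside (lists_in C) g) \<sigma>
        = (\<Sum>v\<in>up_verts X \<sigma>. if set \<sigma> \<in> C then cobd_top X d g (v # \<sigma>) else 0)"
      unfolding uplap_eq_sum[OF s] by (intro sum.cong refl) (simp add: cobd_top_zero_outside[OF C Cons_ocells[OF s]])
    then show ?thesis using uplap_eq_sum[OF s] by (simp add: zero_outside_def lists_in_def)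
  qed (simp add: uplap_outside zero_outside_def)
qed

lemma zero_outside_eigenspace:
  assumes C: "C \<in> components X d" and f: "f \<in> eigenspace_up X d lam"
  shows "zero_outside (lists_in C) f \<in> eigenspace_up X d lam"
proof -
  have "uplap X d (zero_outside (lists_in C) f) = zero_outside (lists_in C) (\<lambda>x. lam * f x)"
    using uplap_zero_outside[OF C] f by (simp add: eigenspace_up_def)
  also have "\<dots> = (\<lambda>x. lam * zero_outside (lists_in C) f x)" by (simp add: zero_outside_def fun_eq_iff)
  moreover have "zero_outside (lists_in C) f \<in> forms X (d - 1)"
    using f by (intro zero_outside_lists_in_forms) (simp add: eigenspace_up_def)
  ultimately show ?thesis by (simp add: eigenspace_up_def)
qed

lemma comp_complex_subset: "comp_complex X d C \<subseteq> X"
  using subset_in_X by (auto simp: comp_complex_def cells_def)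

lemma comp_complex_top_ocells:
  assumes C: "C \<in> components X d"
  shows "\<tau> \<in> ocells (comp_complex X d C) d \<longleftrightarrow> \<tau> \<in> ocells X d \<and> set (tl \<tau>) \<in> C"
proof
  assume t: "\<tau> \<in> ocells (comp_complex X d C) d"
  then obtain T c where T: "T \<in> cells X d" "c \<in> C" "c \<subseteq> T" "set \<tau> \<subseteq> T"
    by (auto simp: ocells_def comp_complex_def)
  have fT: "finite T" using T finite_cell by (auto simp: cells_def)
  have "card (set \<tau>) = card T" using t T by (simp add: ocells_def cells_def distinct_card)
  then have eq: "set \<tau> = T" using card_subset_eq[OF fT T(4)] by simp
  then have to: "\<tau> \<in> ocells X d" using t T by (auto simp: ocells_def cells_def)
  have c: "c \<in> cells X (d - 1)" using component_subset_cells[OF C] T(2) by auto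
  have tl: "set (tl \<tau>) \<in> cells X (d - 1)" using set_ocells_in_cells[OF del_at_ocells[OF to, of 0]] by simp
  have "set (tl \<tau>) \<subseteq> T" using set_del_at_subset[of 0 \<tau>] eq by simp
  then have "(c, set (tl \<tau>)) \<in> (adj X d)\<^sup>*" using adj_rtrancl_if_faces[OF c tl T(1) T(3)] by blast
  then show "\<tau> \<in> ocells X d \<and> set (tl \<tau>) \<in> C" using to component_closed[OF C T(2)] by simp
next
  assume a: "\<tau> \<in> ocells X d \<and> set (tl \<tau>) \<in> C"
  moreover have "set \<tau> \<in> cells X d" "set (tl \<tau>) \<subseteq> set \<tau>"
    using a set_ocells_in_cells set_del_at_subset[of 0 \<tau>] by auto
  ultimately have "set \<tau> \<in> comp_complex X d C" unfolding comp_complex_def by blast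
  then show "\<tau> \<in> ocells (comp_complex X d C) d" using a by (simp add: ocells_def)
qed

lemma comp_complex_low_ocells:
  assumes C: "C \<in> components X d"
  shows "\<sigma> \<in> ocells (comp_complex X d C) (d - 1) \<longleftrightarrow> \<sigma> \<in> ocells X (d - 1) \<and> set \<sigma> \<in> C"
proof
  assume t: "\<sigma> \<in> ocells (comp_complex X d C) (d - 1)"
  then obtain T c where T: "T \<in> cells X d" "c \<in> C" "c \<subseteq> T" "set \<sigma> \<subseteq> T"
    by (auto simp: ocells_def comp_complex_def)
  have so: "\<sigma> \<in> ocells X (d - 1)" using t comp_complex_subset by (auto simp: ocells_def)
  have c: "c \<in> cells X (d - 1)" using component_subset_cells[OF C] T(2) by auto
  have "(c, set \<sigma>) \<in> (adj X d)\<^sup>*"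
    using adj_rtrancl_if_faces[OF c set_ocells_in_cells[OF so] T(1) T(3) T(4)] .
  then show "\<sigma> \<in> ocells X (d - 1) \<and> set \<sigma> \<in> C" using so component_closed[OF C T(2)] by simp
next
  assume a: "\<sigma> \<in> ocells X (d - 1) \<and> set \<sigma> \<in> C"
  then obtain T where "T \<in> cells X d" "set \<sigma> \<subseteq> T" using uniform by (auto simp: uniform_def ocells_def)
  then have "set \<sigma> \<in> comp_complex X d C" using a unfolding comp_complex_def by blast
  then show "\<sigma> \<in> ocells (comp_complex X d C) (d - 1)" using a by (simp add: ocells_def)
qed

lemma coface_in_comp_complex:
  assumes C: "C \<in> components X d" and s: "s \<in> C" and t: "t \<in> X" "s \<subseteq> t" "card t = card s + 1"
  shows "t \<in> comp_complex X d C"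
proof -
  have "card s = d" using component_subset_cells[OF C] s by (auto simp: cells_def)
  then have "t \<in> cells X d" using t by (simp add: cells_def)
  then show ?thesis using s t unfolding comp_complex_def by blast
qed

lemma deg_comp_complex:
  assumes C: "C \<in> components X d" and s: "s \<in> C"
  shows "deg (comp_complex X d C) s = deg X s"
proof -
  have "{t \<in> comp_complex X d C. s \<subseteq> t \<and> card t = card s + 1} = {t \<in> X. s \<subseteq> t \<and> card t = card s + 1}"
    using comp_complex_subset coface_in_comp_complex[OF C s] by blast
  then show ?thesis by (simp add: deg_def)
qed

lemma up_verts_comp_complex:
  assumes C: "C \<in> components X d" and s: "set \<sigma> \<in> C"
  shows "up_verts (comp_complex X d C) \<sigma> = up_verts X \<sigma>"
proof -
  have "insert v (set \<sigma>) \<in> comp_complex X d C" if "v \<notin> set \<sigma>" "insert v (set \<sigma>) \<in> X" for v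
    using coface_in_comp_complex[OF C s that(2) subset_insertI] that(1) by simp
  then show ?thesis using comp_complex_subset by (auto simp: up_verts_def)
qed

lemma cobd_top_comp_complex:
  assumes C: "C \<in> components X d" and t: "\<tau> \<in> ocells X d" and tc: "set (tl \<tau>) \<in> C"
  shows "cobd_top (comp_complex X d C) d h \<tau> = cobd_top X d h \<tau>"
proof -
  have "deg (comp_complex X d C) (set (del_at i \<tau>)) = deg X (set (del_at i \<tau>))" if "i < d + 1" for i
    using deg_comp_complex[OF C] face_in_component_iff[OF C t, of i] that tc by simp
  then show ?thesis using t tc comp_complex_top_ocells[OF C] by (simp add: cobd_top_def)
qed

lemma uplap_comp_complex:
  assumes C: "C \<in> components X d" and h: "zero_outside (lists_in C) h = h"
  shows "uplap (comp_complex X d C) d h = uplap X d h"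
proof
  fix \<sigma>
  show "uplap (comp_complex X d C) d h \<sigma> = uplap X d h \<sigma>"
  proof (cases "\<sigma> \<in> ocells X (d - 1) \<and> set \<sigma> \<in> C")
    case True
    then have "uplap (comp_complex X d C) d h \<sigma>
        = (\<Sum>v\<in>up_verts X \<sigma>. cobd_top (comp_complex X d C) d h (v # \<sigma>))"
      using comp_complex_low_ocells[OF C] up_verts_comp_complex[OF C] by (simp add: uplap_eq_sum)
    also have "\<dots> = (\<Sum>v\<in>up_verts X \<sigma>. cobd_top X d h (v # \<sigma>))"
      using True by (intro sum.cong refl cobd_top_comp_complex[OF C]) (auto intro: Cons_ocells)
    finally show ?thesis using uplap_eq_sum[of \<sigma> X d h] True by simp
  next
    case False
    then have "uplap (comp_complex X d C) d h \<sigma> = 0"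
      using comp_complex_low_ocells[OF C] by (simp add: uplap_outside)
    moreover have "uplap X d h \<sigma> = zero_outside (lists_in C) (uplap X d h) \<sigma>"
      using fun_cong[OF uplap_zero_outside[OF C, of h], of \<sigma>] by (simp only: h)
    moreover have "zero_outside (lists_in C) (uplap X d h) \<sigma> = 0"
      using False uplap_outside[of \<sigma> X d h] by (auto simp: zero_outside_def lists_in_def)
    ultimately show ?thesis by simp
  qed
qed

lemma forms_comp_complex:
  assumes C: "C \<in> components X d"
  shows "forms (comp_complex X d C) (d - 1) = {f \<in> forms X (d - 1). zero_outside (lists_in C) f = f}"
proof safe
  fix f assume f: "f \<in> forms (comp_complex X d C) (d - 1)"
  have zero: "f xs = 0" if "\<not> (xs \<in> ocells X (d - 1) \<and> set xs \<in> C)" for xs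
    using f that comp_complex_low_ocells[OF C] by (simp add: forms_def)
  then show "zero_outside (lists_in C) f = f" by (auto simp: zero_outside_def lists_in_def fun_eq_iff)
  show "f \<in> forms X (d - 1)" unfolding forms_def
  proof safe
    fix xs assume "xs \<notin> ocells X (d - 1)" then show "f xs = 0" using zero by blast
  next
    fix xs i k assume xs: "xs \<in> ocells X (d - 1)" and ik: "i < length xs" "k < length xs" "i \<noteq> k"
    show "f (swap_at xs i k) = - f xs"
    proof (cases "set xs \<in> C")
      case True
      then have "xs \<in> ocells (comp_complex X d C) (d - 1)" using comp_complex_low_ocells[OF C] xs by simp
      then show ?thesis using form_swap_at[OF f _ ik] by simp
    next
      case False
      then show ?thesis using zero[of xs] zero[of "swap_at xs i k"] ik by simp
    qed
  qed
next
  fix f assume f: "f \<in> forms X (d - 1)" and fC: "zero_outside (lists_in C) f = f"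
  show "f \<in> forms (comp_complex X d C) (d - 1)" unfolding forms_def
  proof safe
    fix xs assume "xs \<notin> ocells (comp_complex X d C) (d - 1)"
    then have "xs \<notin> ocells X (d - 1) \<or> set xs \<notin> C" using comp_complex_low_ocells[OF C] by simp
    then show "f xs = 0"
      using form_zero_outside[OF f, of xs] fun_cong[OF fC, of xs] by (auto simp: zero_outside_def lists_in_def)
  next
    fix xs i k assume xs: "xs \<in> ocells (comp_complex X d C) (d - 1)"
      and ik: "i < length xs" "k < length xs" "i \<noteq> k"
    then have "xs \<in> ocells X (d - 1)" using comp_complex_low_ocells[OF C] by simp
    then show "f (swap_at xs i k) = - f xs" using form_swap_at[OF f _ ik] by simp
  qed
qed

lemma eigenspace_comp_complex:
  assumes C: "C \<in> components X d"
  shows "eigenspace_up (comp_complex X d C) d lam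
    = {f \<in> eigenspace_up X d lam. zero_outside (lists_in C) f = f}"
  using forms_comp_complex[OF C] uplap_comp_complex[OF C] by (auto simp: eigenspace_up_def)

lemma mult_up_eq_sum_components:
  "mult_up X d lam = (\<Sum>C\<in>components X d. mult_up (comp_complex X d C) d lam)"
proof -
  have "fun_space.dim (eigenspace_up X d lam)
      = (\<Sum>C\<in>components X d. fun_space.dim {f \<in> eigenspace_up X d lam. zero_outside (lists_in C) f = f})"
  proof (rule dim_eq_sum_dim_zero_outside[OF finite_components])
    show "disjoint_family_on lists_in (components X d)"
      using components_disjoint by (fastforce simp: disjoint_family_on_def lists_in_def)
    show "finite ((\<lambda>s y. if y = s then 1 else 0) ` ocells X (d - 1))" using finite_ocells by simp
    show "eigenspace_up X d lam \<subseteq> fun_space.span ((\<lambda>s y. if y = s then 1 else 0) ` ocells X (d - 1))"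
    proof
      fix f assume "f \<in> eigenspace_up X d lam"
      then have "f \<in> forms X (d - 1)" by (simp add: eigenspace_up_def)
      then show "f \<in> fun_space.span ((\<lambda>s y. if y = s then 1 else 0) ` ocells X (d - 1))"
        using in_span_indicators[OF finite_ocells] form_zero_outside by blast
    qed
    fix f x assume "f \<in> eigenspace_up X d lam" "f x \<noteq> 0"
    then have "x \<in> ocells X (d - 1)" using form_zero_outside by (auto simp: eigenspace_up_def)
    then show "x \<in> (\<Union>C\<in>components X d. lists_in C)"
      using ex_component set_ocells_in_cells by (fastforce simp: lists_in_def)
  qed (rule zero_outside_eigenspace)
  then show ?thesis using eigenspace_comp_complex by (simp add: mult_up_def)
qed

end

theorem mainTheorem1:
  fixes X :: "'a set set" and d :: nat
  assumes "d \<ge> 2" and "finite X" and "is_dcomplex X d" and "uniform X d"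
  shows "(\<forall>lam. mult_up X d lam = (\<Sum>C\<in>components X d. mult_up (comp_complex X d C) d lam))
    \<and> (\<forall>lam. eigenvalue_up X d lam \<longrightarrow> 0 \<le> lam \<and> lam \<le> real d + 1)
    \<and> {f\<in>forms X (d - 1). uplap X d f = (\<lambda>_. 0)} = {f\<in>forms X (d - 1). cobd_top X d f = (\<lambda>_. 0)}
    \<and> (dconnected X d \<longrightarrow>
        ((eigenvalue_up X d (real d + 1) \<longleftrightarrow> disorientable X d)
         \<and> (\<forall>S. disorientation X d S \<longrightarrow>
              uplap X d (bd X d (disF X d S)) = (\<lambda>x. (real d + 1) * bd X d (disF X d S) x)
              \<and> bd X d (disF X d S) \<noteq> (\<lambda>_. 0))))"
proof -
  interpret finite_uniform_complex X d using assms by unfold_locales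
  have bounds: "eigenvalue_up X d lam \<Longrightarrow> 0 \<le> lam \<and> lam \<le> real d + 1" for lam
    using eigenvalue_bounds by (auto simp: eigenvalue_up_def eigenspace_up_def)
  have "eigenvalue_up X d (real d + 1) \<longleftrightarrow> disorientable X d" if "dconnected X d"
  proof
    assume "eigenvalue_up X d (real d + 1)"
    then obtain f where "f \<in> forms X (d - 1)" "f \<noteq> (\<lambda>_. 0)" "uplap X d f = (\<lambda>x. (real d + 1) * f x)"
      by (auto simp: eigenvalue_up_def eigenspace_up_def)
    then show "disorientable X d"
      using disorientation_positive_cells that by (auto simp: disorientable_def)
  next
    assume "disorientable X d"
    then obtain S where "disorientation X d S" by (auto simp: disorientable_def)
    then show "eigenvalue_up X d (real d + 1)"
      using disF_eigenform bd_forms[OF disF_forms] by (auto simp: eigenvalue_up_def eigenspace_up_def)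
  qed
  then show ?thesis
    using mult_up_eq_sum_components bounds uplap_kernel_eq_closed disF_eigenform by blast
qed

end
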